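(* Let $W\ge 1$, $K=\lfloor (W-1)/p\rfloor$, let $\mu_c>0,l_c>0$ be such that $C$ is $\mu_c$-strongly convex and $l_c$-smooth, and $\zeta=l_c/\mu_c$. Let $\varphi$ be any initialization oracle and $\mathbf z(0)$ the vector it produces. Take stepsizes $\gamma_g=1/l_c$, $\phi=1-1/\sqrt\zeta$, $\gamma_c=(1+\phi)/l_c$, $\gamma_\omega=\phi^2/(2-\phi)$, $\gamma_y=\phi^2/((1+\phi)(2-\phi))$, $\gamma_z=\phi^2/(1-\phi^2)$. Then $$\mathrm{Regret}(\mathrm{RHGD})\le \zeta\Big(\frac{\zeta-1}{\zeta}\Big)^{K}\mathrm{Regret}(\varphi),\qquad \mathrm{Regret}(\mathrm{RHTM})\le \zeta^2\Big(\frac{\sqrt\zeta-1}{\sqrt\zeta}\Big)^{2K}\mathrm{Regret}(\varphi).$$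
   Context: Setting: $(A,B)$ in canonical form (indices $0=k_0<k_1<\dots<k_m=n$, $\mathcal I=\{k_1,\dots,k_m\}$; rows $i\notin\mathcal I$ of $A$ equal $e_{i+1}^\top$, rows in $\mathcal I$ arbitrary; $j$-th column of $B$ is $e_{k_j}$; $p_i=k_i-k_{i-1}$, controllability index $p=\max_ip_i$; $A(\mathcal I,:)$ = rows $k_1,\dots,k_m$ of $A$). Dynamics $x_{t+1}=Ax_t+Bu_t$, $x_0=0$, cost $J(\mathbf x,\mathbf u)=\sum_{t=0}^{N-1}[f_t(x_t)+g_t(u_t)]+f_N(x_N)$ with $f_t$ $\mu_f$-strongly convex and $l_f$-smooth, $g_t$ convex and $l_g$-smooth. For $\mathbf z=(z_1,\dots,z_N)\in\mathbb R^{mN}$ ($z_t=0$ for $t\le0$): $x_t(\mathbf z)=(z^1_{t-p_1+1},\dots,z^1_t,\dots,z^m_{t-p_m+1},\dots,z^m_t)^\top$, $u_t(\mathbf z)=z_{t+1}-A(\mathcal I,:)x_t(\mathbf z)$, $C(\mathbf z)=\sum_{t=0}^Nf_t(x_t(\mathbf z))+\sum_{t=0}^{N-1}g_t(u_t(\mathbf z))$; $C(\mathbf z)=J(\mathbf x(\mathbf z),\mathbf u(\mathbf z))$ and $\min C=J^*:=\min\{J(\mathbf x,\mathbf u): x_{t+1}=Ax_t+Bu_t,\ x_0=0\}$. Prediction model: at time $t$ the controller knows the current and past states and $f_s,g_s$ for $s\le t+W-1$. An initialization oracle $\varphi$ produces $\mathbf z(0)\in\mathbb R^{mN}$ with $z_{s}(0)$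 depending only on $\{f_r,g_r\}_{r\le s-1}$; $\mathrm{Regret}(\varphi):=J(\mathbf x(\mathbf z(0)),\mathbf u(\mathbf z(0)))-J^*$ (the controller $u_t=z_{t+1}(0)-A(\mathcal I,:)x_t$). For an algorithm, $\mathrm{Regret}=J(\text{its trajectory})-J^*$. RHGD (receding horizon gradient descent) is the online algorithm that, using only the $W$-step lookahead (exploiting that $\partial C/\partial z_t$ depends only on $z_{t-p},\dots,z_{t+p}$ and $f_s,g_s$ for $t-1\le s\le t+p-1$), applies $u_t=z_{t+1}(K)-A(\mathcal I,:)x_t$ where $\mathbf z(j+1)=\mathbf z(j)-\gamma_g\nabla C(\mathbf z(j))$, $j=0,\dots,K-1$, starting from the oracle's $\mathbf z(0)$; its resulting trajectory is $(\mathbf x(\mathbf z(K)),\mathbf u(\mathbf z(K)))$. RHTM (receding horizon triple momentum) is the same with the gradient step replaced by triple momentum: $\boldsymbol\omega(-1)=\boldsymbol\omega(0)=\mathbf y(0)=\mathbf z(0)$ and, for $j\ge0$, $\boldsymbol\omega(j+1)=(1+\gamma_\omega)\boldsymbol\omega(j)-\gamma_\omega\boldsymbol\omega(j-1)-\gamma_c\nabla C(\mathbf y(j))$, $\mathbf y(j+1)=(1+\gamma_y)\boldsymbol\omega(j+1)-\gamma_y\boldsymbol\omega(j)$, $\mathbf z(j+1)=(1+\gamma_z)\boldsymbol\omega(j+1)-\gamma_z\boldsymbol\omega(j)$; it applies $u_t=z_{t+1}(K)-A(\mathcal I,:)x_t$, giving trajectory $(\mathbf x(\mathbf z(K)),\mathbf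 u(\mathbf z(K)))$. *)

theory Defs
  imports "HOL-Analysis.Analysis"
begin

text \<open>Vectors of R^d are represented as functions nat => real with coordinates
  1..d; all other coordinates are zero.  The topology on nat => real is the
  product topology, which on the finite-dimensional subspace vsp d is the
  Euclidean topology.\<close>

definition vsp :: "nat \<Rightarrow> (nat \<Rightarrow> real) set" where
  "vsp d = {x. \<forall>i. i \<notin> {1..d} \<longrightarrow> x i = 0}"

definition ip :: "nat \<Rightarrow> (nat \<Rightarrow> real) \<Rightarrow> (nat \<Rightarrow> real) \<Rightarrow> real" where
  "ip d x y = (\<Sum>i=1..d. x i * y i)"

definition nrm :: "nat \<Rightarrow> (nat \<Rightarrow> real) \<Rightarrow> real" where
  "nrm d x = sqrt (ip d x x)"

definition has_grad :: "nat \<Rightarrow> ((nat \<Rightarrow> real) \<Rightarrow> real) \<Rightarrow> (nat \<Rightarrow> real) \<Rightarrow> (nat \<Rightarrow> real) \<Rightarrow> bool" where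
  "has_grad d F g x \<longleftrightarrow> g \<in> vsp d \<and>
     ((\<lambda>y. (F y - F x - ip d g (\<lambda>i. y i - x i)) / nrm d (\<lambda>i. y i - x i)) \<longlongrightarrow> 0)
       (at x within vsp d)"

definition grad :: "nat \<Rightarrow> ((nat \<Rightarrow> real) \<Rightarrow> real) \<Rightarrow> (nat \<Rightarrow> real) \<Rightarrow> (nat \<Rightarrow> real)" where
  "grad d F x = (SOME g. has_grad d F g x)"

definition smooth_on :: "nat \<Rightarrow> real \<Rightarrow> ((nat \<Rightarrow> real) \<Rightarrow> real) \<Rightarrow> bool" where
  "smooth_on d l F \<longleftrightarrow> (\<forall>x\<in>vsp d. \<exists>g. has_grad d F g x) \<and>
     (\<forall>x\<in>vsp d. \<forall>y\<in>vsp d.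
        nrm d (\<lambda>i. grad d F x i - grad d F y i) \<le> l * nrm d (\<lambda>i. x i - y i))"

definition strongly_convex_on :: "nat \<Rightarrow> real \<Rightarrow> ((nat \<Rightarrow> real) \<Rightarrow> real) \<Rightarrow> bool" where
  "strongly_convex_on d \<mu> F \<longleftrightarrow> (\<forall>x\<in>vsp d. \<forall>y\<in>vsp d. \<forall>\<theta>\<in>{0..1::real}.
     F (\<lambda>i. \<theta> * x i + (1 - \<theta>) * y i)
       \<le> \<theta> * F x + (1 - \<theta>) * F y - \<mu> / 2 * \<theta> * (1 - \<theta>) * (nrm d (\<lambda>i. x i - y i))\<^sup>2)"

definition canonical_form ::
  "nat \<Rightarrow> nat \<Rightarrow> (nat \<Rightarrow> nat) \<Rightarrow> (nat \<Rightarrow> nat \<Rightarrow> real) \<Rightarrow> (nat \<Rightarrow> nat \<Rightarrow> real) \<Rightarrow> bool" where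
  "canonical_form n m k A B \<longleftrightarrow> 1 \<le> m \<and> k 0 = 0 \<and> k m = n \<and> (\<forall>j<m. k j < k (Suc j)) \<and>
     (\<forall>i\<in>{1..n}. i \<notin> k ` {1..m} \<longrightarrow> (\<forall>l\<in>{1..n}. A i l = (if l = i + 1 then 1 else 0))) \<and>
     (\<forall>i\<in>{1..n}. \<forall>j\<in>{1..m}. B i j = (if i = k j then 1 else 0))"

definition ctrl_index :: "nat \<Rightarrow> (nat \<Rightarrow> nat) \<Rightarrow> nat" where
  "ctrl_index m k = Max ((\<lambda>j. k j - k (j - 1)) ` {1..m})"

text \<open>z = (z_1,...,z_N) in R^(mN) is stored flat: z_s^j is coordinate (s-1)*m + j;
  z_s = 0 for s <= 0.\<close>
definition zc :: "nat \<Rightarrow> (nat \<Rightarrow> real) \<Rightarrow> int \<Rightarrow> nat \<Rightarrow> real" where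
  "zc m Z s j = (if 1 \<le> s then Z ((nat s - 1) * m + j) else 0)"

definition blk :: "(nat \<Rightarrow> nat) \<Rightarrow> nat \<Rightarrow> nat" where
  "blk k i = (LEAST j. i \<le> k j)"

text \<open>x_t(z): coordinate k_(j-1)+r (1 <= r <= p_j) equals z^j_(t-p_j+r) = z^j_(t - k_j + i).\<close>
definition xz :: "nat \<Rightarrow> nat \<Rightarrow> (nat \<Rightarrow> nat) \<Rightarrow> (nat \<Rightarrow> real) \<Rightarrow> nat \<Rightarrow> (nat \<Rightarrow> real)" where
  "xz n m k Z t = (\<lambda>i. if i \<in> {1..n}
       then zc m Z (int t - int (k (blk k i)) + int i) (blk k i) else 0)"

definition uz :: "nat \<Rightarrow> nat \<Rightarrow> (nat \<Rightarrow> nat) \<Rightarrow> (nat \<Rightarrow> nat \<Rightarrow> real) \<Rightarrow> (nat \<Rightarrow> real) \<Rightarrow> nat \<Rightarrow> (nat \<Rightarrow> real)" where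
  "uz n m k A Z t = (\<lambda>j. if j \<in> {1..m}
       then zc m Z (int t + 1) j - (\<Sum>l=1..n. A (k j) l * xz n m k Z t l) else 0)"

definition Ccost :: "nat \<Rightarrow> nat \<Rightarrow> nat \<Rightarrow> (nat \<Rightarrow> nat) \<Rightarrow> (nat \<Rightarrow> nat \<Rightarrow> real)
    \<Rightarrow> (nat \<Rightarrow> (nat \<Rightarrow> real) \<Rightarrow> real) \<Rightarrow> (nat \<Rightarrow> (nat \<Rightarrow> real) \<Rightarrow> real) \<Rightarrow> (nat \<Rightarrow> real) \<Rightarrow> real" where
  "Ccost n m N k A f g Z = (\<Sum>t=0..N. f t (xz n m k Z t)) + (\<Sum>t<N. g t (uz n m k A Z t))"

definition Jcost :: "nat \<Rightarrow> (nat \<Rightarrow> (nat \<Rightarrow> real) \<Rightarrow> real) \<Rightarrow> (nat \<Rightarrow> (nat \<Rightarrow> real) \<Rightarrow> real)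
    \<Rightarrow> (nat \<Rightarrow> nat \<Rightarrow> real) \<Rightarrow> (nat \<Rightarrow> nat \<Rightarrow> real) \<Rightarrow> real" where
  "Jcost N f g x u = (\<Sum>t<N. f t (x t) + g t (u t)) + f N (x N)"

definition feasible :: "nat \<Rightarrow> nat \<Rightarrow> nat \<Rightarrow> (nat \<Rightarrow> nat \<Rightarrow> real) \<Rightarrow> (nat \<Rightarrow> nat \<Rightarrow> real)
    \<Rightarrow> (nat \<Rightarrow> nat \<Rightarrow> real) \<Rightarrow> (nat \<Rightarrow> nat \<Rightarrow> real) \<Rightarrow> bool" where
  "feasible n m N A B x u \<longleftrightarrow> x 0 = (\<lambda>_. 0) \<and> (\<forall>t\<le>N. x t \<in> vsp n) \<and> (\<forall>t<N. u t \<in> vsp m) \<and>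
     (\<forall>t<N. \<forall>i\<in>{1..n}. x (Suc t) i = (\<Sum>l=1..n. A i l * x t l) + (\<Sum>j=1..m. B i j * u t j))"

definition Jstar :: "nat \<Rightarrow> nat \<Rightarrow> nat \<Rightarrow> (nat \<Rightarrow> nat \<Rightarrow> real) \<Rightarrow> (nat \<Rightarrow> nat \<Rightarrow> real)
    \<Rightarrow> (nat \<Rightarrow> (nat \<Rightarrow> real) \<Rightarrow> real) \<Rightarrow> (nat \<Rightarrow> (nat \<Rightarrow> real) \<Rightarrow> real) \<Rightarrow> real" where
  "Jstar n m N A B f g = Inf {Jcost N f g x u | x u. feasible n m N A B x u}"

definition regret_z :: "nat \<Rightarrow> nat \<Rightarrow> nat \<Rightarrow> (nat \<Rightarrow> nat) \<Rightarrow> (nat \<Rightarrow> nat \<Rightarrow> real) \<Rightarrow> (nat \<Rightarrow> nat \<Rightarrow> real)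
    \<Rightarrow> (nat \<Rightarrow> (nat \<Rightarrow> real) \<Rightarrow> real) \<Rightarrow> (nat \<Rightarrow> (nat \<Rightarrow> real) \<Rightarrow> real) \<Rightarrow> (nat \<Rightarrow> real) \<Rightarrow> real" where
  "regret_z n m N k A B f g Z = Jcost N f g (xz n m k Z) (uz n m k A Z) - Jstar n m N A B f g"

definition gd_iter :: "nat \<Rightarrow> ((nat \<Rightarrow> real) \<Rightarrow> real) \<Rightarrow> real \<Rightarrow> (nat \<Rightarrow> real) \<Rightarrow> nat \<Rightarrow> (nat \<Rightarrow> real)" where
  "gd_iter d F \<gamma> z0 j = ((\<lambda>z i. z i - \<gamma> * grad d F z i) ^^ j) z0"

text \<open>Triple momentum state (omega(j), omega(j-1), y(j)).\<close>
primrec tm_st :: "nat \<Rightarrow> ((nat \<Rightarrow> real) \<Rightarrow> real) \<Rightarrow> real \<Rightarrow> real \<Rightarrow> real \<Rightarrow> (nat \<Rightarrow> real) \<Rightarrow> nat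
    \<Rightarrow> (nat \<Rightarrow> real) \<times> (nat \<Rightarrow> real) \<times> (nat \<Rightarrow> real)" where
  "tm_st d F gc gw gy z0 0 = (z0, z0, z0)"
| "tm_st d F gc gw gy z0 (Suc j) = (case tm_st d F gc gw gy z0 j of (w, wp, y) \<Rightarrow>
     let wn = (\<lambda>i. (1 + gw) * w i - gw * wp i - gc * grad d F y i)
     in (wn, w, (\<lambda>i. (1 + gy) * wn i - gy * w i)))"

definition tm_z :: "nat \<Rightarrow> ((nat \<Rightarrow> real) \<Rightarrow> real) \<Rightarrow> real \<Rightarrow> real \<Rightarrow> real \<Rightarrow> real \<Rightarrow> (nat \<Rightarrow> real) \<Rightarrow> nat
    \<Rightarrow> (nat \<Rightarrow> real)" where
  "tm_z d F gc gw gy gz z0 j = (case tm_st d F gc gw gy z0 j of (w, wp, _) \<Rightarrow>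
     (\<lambda>i. (1 + gz) * w i - gz * wp i))"

end

theory Submission
  imports Defs
begin

text \<open>Writing x_t and u_t as functions of the flat vector z is a bijection onto the feasible
  trajectories (x_t is read off the coordinates k_j of the states, u_t from the dynamics), so
  J* = min C and the regret of any z is C z - min C. Gradient descent contracts C - min C by 1 - 1/\<zeta> per step
  (descent lemma and the Polyak-Lojasiewicz inequality). For triple momentum, a Lyapunov function
  built from interpolation inequalities contracts by (1 - 1/sqrt \<zeta>)^2 per step; comparing it with
  C - min C at both ends costs the factor \<zeta>^2.\<close>

section \<open>The inner product on vsp d\<close>

lemma ip_commute: "ip d x y = ip d y x"
  unfolding ip_def by (simp add: mult.commute)

lemma ip_add_left: "ip d (\<lambda>i. x i + y i) z = ip d x z + ip d y z"
  unfolding ip_def by (simp add: distrib_right sum.distrib)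

lemma ip_diff_left: "ip d (\<lambda>i. x i - y i) z = ip d x z - ip d y z"
  unfolding ip_def by (simp add: left_diff_distrib sum_subtractf)

lemma ip_scale_left: "ip d (\<lambda>i. c * x i) z = c * ip d x z"
  unfolding ip_def by (simp add: sum_distrib_left mult.assoc)

lemma ip_minus_left: "ip d (\<lambda>i. - x i) z = - ip d x z"
  unfolding ip_def by (simp add: sum_negf)

lemma ip_add_right: "ip d z (\<lambda>i. x i + y i) = ip d z x + ip d z y"
  unfolding ip_def by (simp add: distrib_left sum.distrib)

lemma ip_diff_right: "ip d z (\<lambda>i. x i - y i) = ip d z x - ip d z y"
  unfolding ip_def by (simp add: right_diff_distrib sum_subtractf)

lemma ip_scale_right: "ip d z (\<lambda>i. c * x i) = c * ip d z x"
  unfolding ip_def by (simp add: sum_distrib_left mult.left_commute)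

lemma ip_minus_right: "ip d z (\<lambda>i. - x i) = - ip d z x"
  unfolding ip_def by (simp add: sum_negf)

lemma ip_zero_left [simp]: "ip d (\<lambda>i. 0) z = 0"
  unfolding ip_def by simp

lemma ip_zero_right [simp]: "ip d z (\<lambda>i. 0) = 0"
  unfolding ip_def by simp

lemmas ip_linear = ip_add_left ip_diff_left ip_scale_left ip_minus_left
  ip_add_right ip_diff_right ip_scale_right ip_minus_right

lemma ip_self_nonneg: "0 \<le> ip d x x"
  unfolding ip_def by (rule sum_nonneg) simp

lemma nrm_nonneg: "0 \<le> nrm d x"
  unfolding nrm_def using ip_self_nonneg by simp

lemma power2_nrm: "(nrm d x)\<^sup>2 = ip d x x"
  unfolding nrm_def using ip_self_nonneg by simp

lemma nrm_scale: "nrm d (\<lambda>i. c * x i) = \<bar>c\<bar> * nrm d x"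
  unfolding nrm_def ip_linear by (simp add: real_sqrt_mult mult.assoc[symmetric])

lemma ip_le_nrm_mult: "ip d x y \<le> nrm d x * nrm d y"
proof -
  have "(ip d x y)\<^sup>2 \<le> ip d x x * ip d y y"
    unfolding ip_def using Cauchy_Schwarz_ineq_sum[of x y "{1..d}"] by (simp add: power2_eq_square)
  then have "\<bar>ip d x y\<bar> \<le> sqrt (ip d x x * ip d y y)"
    by (metis abs_le_square_iff real_sqrt_abs real_sqrt_le_iff)
  then show ?thesis
    unfolding nrm_def by (simp add: real_sqrt_mult)
qed

lemma minus_nrm_mult_le_ip: "- (nrm d x * nrm d y) \<le> ip d x y"
  using ip_le_nrm_mult[of d "\<lambda>i. - x i" y] unfolding ip_linear nrm_def by simp

lemma abs_coord_le_nrm: "i \<in> {1..d} \<Longrightarrow> \<bar>x i\<bar> \<le> nrm d x"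
proof -
  assume i: "i \<in> {1..d}"
  have "x i * x i \<le> (\<Sum>j=1..d. x j * x j)"
    by (rule member_le_sum[OF i]) auto
  then show ?thesis
    unfolding nrm_def ip_def by (metis real_sqrt_abs2 real_sqrt_le_mono)
qed

lemma ip_self_eq_0_iff: "x \<in> vsp d \<Longrightarrow> ip d x x = 0 \<longleftrightarrow> x = (\<lambda>i. 0)"
proof
  assume x: "x \<in> vsp d" and "ip d x x = 0"
  then have "\<forall>i\<in>{1..d}. x i * x i = 0"
    unfolding ip_def by (subst (asm) sum_nonneg_eq_0_iff) auto
  then show "x = (\<lambda>i. 0)"
    using x unfolding vsp_def by (auto intro!: ext)
qed simp

lemma vsp_linear [intro]:
  "x \<in> vsp d \<Longrightarrow> y \<in> vsp d \<Longrightarrow> (\<lambda>i. a * x i + b * y i) \<in> vsp d"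
  "x \<in> vsp d \<Longrightarrow> y \<in> vsp d \<Longrightarrow> (\<lambda>i. x i - y i) \<in> vsp d"
  "x \<in> vsp d \<Longrightarrow> y \<in> vsp d \<Longrightarrow> (\<lambda>i. x i + y i) \<in> vsp d"
  "x \<in> vsp d \<Longrightarrow> (\<lambda>i. a * x i) \<in> vsp d"
  unfolding vsp_def by auto

lemma vsp_eqI: "x \<in> vsp d \<Longrightarrow> y \<in> vsp d \<Longrightarrow> (\<And>i. i \<in> {1..d} \<Longrightarrow> x i = y i) \<Longrightarrow> x = y"
  unfolding vsp_def by (rule ext) (metis (mono_tags, lifting) mem_Collect_eq)

lemma vsp_0: "vsp 0 = {\<lambda>i. 0}"
  unfolding vsp_def by auto

section \<open>First-order facts for smooth strongly convex functions\<close>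

lemma has_grad_grad: "smooth_on d l F \<Longrightarrow> x \<in> vsp d \<Longrightarrow> has_grad d F (grad d F x) x"
  unfolding smooth_on_def grad_def by (metis someI_ex)

lemma grad_in_vsp: "smooth_on d l F \<Longrightarrow> x \<in> vsp d \<Longrightarrow> grad d F x \<in> vsp d"
  using has_grad_grad unfolding has_grad_def by blast

lemma filterlim_line_at_within_vsp:
  assumes x: "x \<in> vsp d" and v: "v \<in> vsp d" "v \<noteq> (\<lambda>i. 0)"
  shows "filterlim (\<lambda>t. \<lambda>i. x i + t * v i) (at (\<lambda>i. x i + t0 * v i) within vsp d) (at t0)"
  unfolding filterlim_at
proof
  obtain j where j: "v j \<noteq> 0" using v(2) by auto
  show "\<forall>\<^sub>F t in at t0. (\<lambda>i. x i + t * v i) \<in> vsp d \<and> (\<lambda>i. x i + t * v i) \<noteq> (\<lambda>i. x i + t0 * v i)"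
    unfolding eventually_at_filter
  proof (rule always_eventually, intro allI impI conjI)
    fix t :: real assume "t \<noteq> t0"
    then have "x j + t * v j \<noteq> x j + t0 * v j" using j by simp
    then show "(\<lambda>i. x i + t * v i) \<noteq> (\<lambda>i. x i + t0 * v i)" by metis
  qed (use x v in auto)
  have "continuous_on UNIV (\<lambda>t. \<lambda>i. x i + t * v i)"
    by (rule continuous_on_coordinatewise_then_product) (intro continuous_intros)
  then show "((\<lambda>t. \<lambda>i. x i + t * v i) \<longlongrightarrow> (\<lambda>i. x i + t0 * v i)) (at t0)"
    by (simp add: continuous_on_def)
qed

lemma has_real_derivative_if_remainder_tendsto_0:
  fixes \<phi> :: "real \<Rightarrow> real"
  assumes c: "c > 0"
    and lim: "((\<lambda>t. (\<phi> t - \<phi> t0 - (t - t0) * D) / (\<bar>t - t0\<bar> * c)) \<longlongrightarrow> 0) (at t0)"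
  shows "(\<phi> has_real_derivative D) (at t0)"
proof -
  have abs_lim: "((\<lambda>t. \<bar>(\<phi> t - \<phi> t0 - (t - t0) * D) / (\<bar>t - t0\<bar> * c)\<bar> * c) \<longlongrightarrow> 0) (at t0)"
    using lim by (intro tendsto_mult_left_zero tendsto_rabs_zero)
  have ev: "\<forall>\<^sub>F t in at t0. \<bar>(\<phi> t - \<phi> t0 - (t - t0) * D) / (\<bar>t - t0\<bar> * c)\<bar> * c
      = \<bar>(\<phi> t - \<phi> t0) / (t - t0) - D\<bar>"
    unfolding eventually_at_filter
  proof (rule always_eventually, intro allI impI)
    fix t assume "t \<noteq> t0"
    then have "(\<phi> t - \<phi> t0) / (t - t0) - D = (\<phi> t - \<phi> t0 - (t - t0) * D) / (t - t0)"
      by (simp add: field_simps)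
    then show "\<bar>(\<phi> t - \<phi> t0 - (t - t0) * D) / (\<bar>t - t0\<bar> * c)\<bar> * c = \<bar>(\<phi> t - \<phi> t0) / (t - t0) - D\<bar>"
      using c \<open>t \<noteq> t0\<close> by (simp add: abs_mult abs_divide)
  qed
  have "((\<lambda>t. \<bar>(\<phi> t - \<phi> t0) / (t - t0) - D\<bar>) \<longlongrightarrow> 0) (at t0)"
    using tendsto_cong[OF ev] abs_lim by blast
  then have "((\<lambda>t. (\<phi> t - \<phi> t0) / (t - t0) - D) \<longlongrightarrow> 0) (at t0)"
    by (rule tendsto_rabs_zero_iff[THEN iffD1])
  then show ?thesis
    unfolding has_field_derivative_iff LIM_zero_iff .
qed

lemma has_real_derivative_along_line:
  assumes G: "\<forall>z\<in>vsp d. has_grad d F (G z) z" and x: "x \<in> vsp d" and v: "v \<in> vsp d"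
  shows "((\<lambda>t. F (\<lambda>i. x i + t * v i)) has_real_derivative ip d (G (\<lambda>i. x i + t0 * v i)) v) (at t0)"
proof (cases "v = (\<lambda>i. 0)")
  case True
  then show ?thesis by simp
next
  case False
  define p where "p = (\<lambda>i. x i + t0 * v i)"
  define \<phi> where "\<phi> = (\<lambda>t. F (\<lambda>i. x i + t * v i))"
  define c where "c = ip d (G p) v"
  have "p \<in> vsp d"
    unfolding p_def using x v by auto
  then have "((\<lambda>y. (F y - F p - ip d (G p) (\<lambda>i. y i - p i)) / nrm d (\<lambda>i. y i - p i)) \<longlongrightarrow> 0)
      (at p within vsp d)"
    using G unfolding has_grad_def by auto
  from filterlim_compose[OF this filterlim_line_at_within_vsp[OF x v False, of t0, folded p_def]]
  have "((\<lambda>t. (F (\<lambda>i. x i + t * v i) - F p - ip d (G p) (\<lambda>i. x i + t * v i - p i))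
      / nrm d (\<lambda>i. x i + t * v i - p i)) \<longlongrightarrow> 0) (at t0)"
    by (simp add: o_def)
  moreover have "(F (\<lambda>i. x i + t * v i) - F p - ip d (G p) (\<lambda>i. x i + t * v i - p i))
      / nrm d (\<lambda>i. x i + t * v i - p i) = (\<phi> t - \<phi> t0 - (t - t0) * c) / (\<bar>t - t0\<bar> * nrm d v)" for t
  proof -
    have shift: "(\<lambda>i. x i + t * v i - p i) = (\<lambda>i. (t - t0) * v i)"
      unfolding p_def by (auto simp: algebra_simps)
    show ?thesis
      by (simp only: shift ip_scale_right nrm_scale) (simp add: \<phi>_def c_def p_def mult.commute)
  qed
  ultimately have lim: "((\<lambda>t. (\<phi> t - \<phi> t0 - (t - t0) * c) / (\<bar>t - t0\<bar> * nrm d v)) \<longlongrightarrow> 0) (at t0)"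
    by simp
  have "nrm d v > 0"
    using False ip_self_eq_0_iff[OF v] ip_self_nonneg[of d v] unfolding nrm_def by auto
  from has_real_derivative_if_remainder_tendsto_0[OF this lim] show ?thesis
    unfolding \<phi>_def c_def p_def .
qed

lemma strongly_convex_first_order:
  assumes G: "\<forall>z\<in>vsp d. has_grad d F (G z) z" and sc: "strongly_convex_on d \<mu> F"
    and x: "x \<in> vsp d" and y: "y \<in> vsp d"
  shows "F x + ip d (G x) (\<lambda>i. y i - x i) + \<mu> / 2 * (nrm d (\<lambda>i. y i - x i))\<^sup>2 \<le> F y"
proof -
  define v where "v = (\<lambda>i. y i - x i)"
  define \<phi> where "\<phi> = (\<lambda>t. F (\<lambda>i. x i + t * v i))"
  define q where "q = (nrm d v)\<^sup>2"
  have v: "v \<in> vsp d" unfolding v_def using x y by auto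
  have "(\<phi> has_real_derivative ip d (G x) v) (at 0)"
    using has_real_derivative_along_line[OF G x v, of 0] unfolding \<phi>_def by simp
  then have "((\<lambda>t. (\<phi> t - \<phi> 0) / (t - 0)) \<longlongrightarrow> ip d (G x) v) (at_right 0)"
    unfolding has_field_derivative_iff by (rule tendsto_mono[OF at_le, rotated]) simp
  moreover have "((\<lambda>t. F y - F x - \<mu> / 2 * (1 - t) * q) \<longlongrightarrow> F y - F x - \<mu> / 2 * (1 - 0) * q)
      (at_right 0)"
    by (intro tendsto_intros)
  moreover have "\<forall>\<^sub>F t in at_right 0. (\<phi> t - \<phi> 0) / (t - 0) \<le> F y - F x - \<mu> / 2 * (1 - t) * q"
    using eventually_at_right_real[of 0 1, OF zero_less_one]
  proof (rule eventually_mono)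
    fix t :: real assume t: "t \<in> {0<..<1}"
    have "F (\<lambda>i. t * y i + (1 - t) * x i) \<le> t * F y + (1 - t) * F x - \<mu> / 2 * t * (1 - t) * q"
      using sc y x t unfolding strongly_convex_on_def q_def v_def by auto
    moreover have "(\<lambda>i. t * y i + (1 - t) * x i) = (\<lambda>i. x i + t * v i)"
      unfolding v_def by (auto simp: algebra_simps)
    ultimately have "\<phi> t - \<phi> 0 \<le> t * (F y - F x - \<mu> / 2 * (1 - t) * q)"
      unfolding \<phi>_def by (simp add: algebra_simps)
    then show "(\<phi> t - \<phi> 0) / (t - 0) \<le> F y - F x - \<mu> / 2 * (1 - t) * q"
      using t by (simp add: divide_le_eq mult.commute)
  qed
  ultimately have "ip d (G x) v \<le> F y - F x - \<mu> / 2 * (1 - 0) * q"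
    by (intro tendsto_le[OF trivial_limit_at_right_real]) auto
  then show ?thesis
    unfolding v_def q_def by simp
qed

lemma smooth_quadratic_upper_bound:
  assumes sm: "smooth_on d L F" and x: "x \<in> vsp d" and y: "y \<in> vsp d" and L: "L \<ge> 0"
  shows "F y \<le> F x + ip d (grad d F x) (\<lambda>i. y i - x i) + L / 2 * (nrm d (\<lambda>i. y i - x i))\<^sup>2"
proof -
  define v where "v = (\<lambda>i. y i - x i)"
  define c where "c = ip d (grad d F x) v"
  define \<psi> where "\<psi> = (\<lambda>t. F (\<lambda>i. x i + t * v i) - t * c - L / 2 * t\<^sup>2 * (nrm d v)\<^sup>2)"
  have v: "v \<in> vsp d" unfolding v_def using x y by auto
  have G: "\<forall>z\<in>vsp d. has_grad d F (grad d F z) z"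
    using has_grad_grad[OF sm] by blast
  \<comment> \<open>The derivative of \<psi> is ip d (grad d F (x + t v) - grad d F x) v - L t |v|^2, which is
    nonpositive by Cauchy-Schwarz and the Lipschitz bound on the gradient.\<close>
  have "\<psi> 1 \<le> \<psi> 0"
  proof (rule DERIV_nonpos_imp_nonincreasing[of 0 1])
    fix t :: real assume t: "0 \<le> t" "t \<le> 1"
    define xt where "xt = (\<lambda>i. x i + t * v i)"
    have xt: "xt \<in> vsp d" unfolding xt_def using x v by auto
    have "(\<lambda>i. xt i - x i) = (\<lambda>i. t * v i)" unfolding xt_def by auto
    then have nrm_xt: "nrm d (\<lambda>i. xt i - x i) = t * nrm d v"
      using t by (simp add: nrm_scale)
    have D: "(\<psi> has_real_derivative (ip d (grad d F xt) v - c - L / 2 * (2 * t) * (nrm d v)\<^sup>2)) (at t)"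
      unfolding \<psi>_def xt_def
      by (rule derivative_eq_intros has_real_derivative_along_line[OF G x v] | simp)+
    have "ip d (grad d F xt) v - c = ip d (\<lambda>i. grad d F xt i - grad d F x i) v"
      unfolding c_def ip_diff_left ..
    also have "\<dots> \<le> nrm d (\<lambda>i. grad d F xt i - grad d F x i) * nrm d v"
      by (rule ip_le_nrm_mult)
    also have "\<dots> \<le> (L * nrm d (\<lambda>i. xt i - x i)) * nrm d v"
      using sm xt x unfolding smooth_on_def by (intro mult_right_mono) (auto simp: nrm_nonneg)
    finally have "ip d (grad d F xt) v - c - L / 2 * (2 * t) * (nrm d v)\<^sup>2 \<le> 0"
      unfolding nrm_xt by (simp add: power2_eq_square algebra_simps)
    with D show "\<exists>y. (\<psi> has_real_derivative y) (at t) \<and> y \<le> 0" by blast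
  qed simp
  moreover have "(\<lambda>i. x i + 1 * v i) = y"
    unfolding v_def by auto
  ultimately show ?thesis
    unfolding \<psi>_def c_def v_def by simp
qed

lemma smooth_gradient_step_decrease:
  assumes sm: "smooth_on d L F" and L: "L > 0" and z: "z \<in> vsp d"
  shows "F (\<lambda>i. z i - 1 / L * grad d F z i) \<le> F z - ip d (grad d F z) (grad d F z) / (2 * L)"
proof -
  define g where "g = grad d F z"
  have "(\<lambda>i. z i - 1 / L * g i) \<in> vsp d"
    using z grad_in_vsp[OF sm z] unfolding g_def vsp_def by simp
  from smooth_quadratic_upper_bound[OF sm z this[unfolded g_def]] L
  have "F (\<lambda>i. z i - 1 / L * g i) \<le> F z + ip d g (\<lambda>i. - (1 / L) * g i) + L / 2 * (nrm d (\<lambda>i. - (1 / L) * g i))\<^sup>2"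
    unfolding g_def by simp
  also have "\<dots> = F z - ip d g g / (2 * L)"
    unfolding ip_scale_right nrm_scale power_mult_distrib power2_abs power2_nrm
    using L by (simp add: power2_eq_square field_simps)
  finally show ?thesis
    unfolding g_def .
qed

lemma interpolation_quadratic_bound:
  assumes sm: "smooth_on d L F" and sc: "strongly_convex_on d \<mu> F" and L: "L \<ge> 0"
    and x: "x \<in> vsp d" and y: "y \<in> vsp d" and t: "t > 0"
  defines "D \<equiv> \<lambda>i. grad d F x i - grad d F y i - \<mu> * (x i - y i)"
    and "e \<equiv> \<lambda>i. x i - y i"
  shows "t * ip d D D - (L - \<mu>) * t\<^sup>2 / 2 * ip d D D
    \<le> F x - F y - ip d (grad d F y) e - \<mu> / 2 * ip d e e"
proof -
  define gx gy where "gx = grad d F x" and "gy = grad d F y"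
  define w where "w = (\<lambda>i. x i - t * D i)"
  have "D \<in> vsp d"
    unfolding D_def using x y grad_in_vsp[OF sm x] grad_in_vsp[OF sm y] by (auto simp: vsp_def)
  then have w: "w \<in> vsp d" unfolding w_def using x by auto
  \<comment> \<open>Compare F at w = x - t D from below (strong convexity at y) and from above (smoothness at x).\<close>
  have lower: "F y + ip d gy (\<lambda>i. w i - y i) + \<mu> / 2 * (nrm d (\<lambda>i. w i - y i))\<^sup>2 \<le> F w"
    unfolding gy_def by (rule strongly_convex_first_order[OF _ sc y w]) (use has_grad_grad[OF sm] in blast)
  have upper: "F w \<le> F x + ip d gx (\<lambda>i. w i - x i) + L / 2 * (nrm d (\<lambda>i. w i - x i))\<^sup>2"
    unfolding gx_def by (rule smooth_quadratic_upper_bound[OF sm x w L])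
  have wy: "(\<lambda>i. w i - y i) = (\<lambda>i. e i - t * D i)" and wx: "(\<lambda>i. w i - x i) = (\<lambda>i. - (t * D i))"
    unfolding w_def e_def by auto
  from lower upper have "F y + ip d gy (\<lambda>i. e i - t * D i) + \<mu> / 2 * ip d (\<lambda>i. e i - t * D i) (\<lambda>i. e i - t * D i)
      \<le> F x + ip d gx (\<lambda>i. - (t * D i)) + L / 2 * ip d (\<lambda>i. - (t * D i)) (\<lambda>i. - (t * D i))"
    unfolding wy wx power2_nrm by linarith
  then have "F y + (ip d gy e - t * ip d gy D) + \<mu> / 2 * (ip d e e - 2 * t * ip d e D + t\<^sup>2 * ip d D D)
      \<le> F x - t * ip d gx D + L / 2 * (t\<^sup>2 * ip d D D)"
    by (simp add: ip_linear ip_commute[of d D e] power2_eq_square algebra_simps)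
  moreover have DD: "ip d D D = ip d gx D - ip d gy D - \<mu> * ip d e D"
    unfolding D_def e_def gx_def gy_def by (simp add: ip_linear)
  ultimately show ?thesis
    unfolding gy_def[symmetric] DD by (simp add: power2_eq_square algebra_simps add_divide_distrib diff_divide_distrib)
qed

lemma smooth_strongly_convex_interpolation:
  assumes sm: "smooth_on d L F" and sc: "strongly_convex_on d \<mu> F" and \<mu>: "0 \<le> \<mu>" "\<mu> \<le> L"
    and x: "x \<in> vsp d" and y: "y \<in> vsp d"
  defines "D \<equiv> \<lambda>i. grad d F x i - grad d F y i - \<mu> * (x i - y i)"
    and "e \<equiv> \<lambda>i. x i - y i"
  shows "ip d D D \<le> 2 * (L - \<mu>) * (F x - F y - ip d (grad d F y) e - \<mu> / 2 * ip d e e)"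
proof -
  define P where "P = F x - F y - ip d (grad d F y) e - \<mu> / 2 * ip d e e"
  have bound: "t * ip d D D - (L - \<mu>) * t\<^sup>2 / 2 * ip d D D \<le> P" if "t > 0" for t
    using interpolation_quadratic_bound[OF sm sc _ x y that] \<mu> unfolding P_def D_def e_def by simp
  show ?thesis
  proof (cases "L = \<mu>")
    case True
    \<comment> \<open>Then the bound is linear in t, which forces ip d D D = 0.\<close>
    show ?thesis
    proof (rule ccontr)
      assume "\<not> ?thesis"
      then have pos: "ip d D D > 0" using True by simp
      have "(\<bar>P\<bar> + 1) / ip d D D * ip d D D \<le> P"
        using bound[of "(\<bar>P\<bar> + 1) / ip d D D"] pos True by simp
      then show False using pos by simp
    qed
  next
    case False
    then have L\<mu>: "L - \<mu> > 0" using \<mu> by simp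
    have "1 / a * X - a * (1 / a)\<^sup>2 / 2 * X = X / (2 * a)" if "a \<noteq> 0" for a X :: real
      using that by (simp add: power2_eq_square field_simps)
    then have "1 / (L - \<mu>) * ip d D D - (L - \<mu>) * (1 / (L - \<mu>))\<^sup>2 / 2 * ip d D D = ip d D D / (2 * (L - \<mu>))"
      using L\<mu> by simp
    then have "ip d D D / (2 * (L - \<mu>)) \<le> P"
      using bound[of "1 / (L - \<mu>)"] L\<mu> by simp
    then show ?thesis
      unfolding P_def using L\<mu> by (simp add: field_simps)
  qed
qed

lemma smooth_imp_continuous_on_vsp:
  assumes sm: "smooth_on d L F"
  shows "continuous_on (vsp d) F"
  unfolding continuous_on_def
proof
  fix x assume x: "x \<in> vsp d"
  define g where "g = grad d F x"
  define r where "r = (\<lambda>y. (F y - F x - ip d g (\<lambda>i. y i - x i)) / nrm d (\<lambda>i. y i - x i))"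
  have coord: "((\<lambda>y::nat \<Rightarrow> real. y i) \<longlongrightarrow> x i) (at x within vsp d)" for i
    by (rule tendsto_mono[OF at_le[OF subset_UNIV]])
      (use continuous_on_product_coordinates[of i] in \<open>auto simp: continuous_on_def\<close>)
  have "((\<lambda>y. \<Sum>i=1..d. g i * (y i - x i)) \<longlongrightarrow> (\<Sum>i=1..d. g i * (x i - x i))) (at x within vsp d)"
    by (intro tendsto_intros coord)
  then have lin: "((\<lambda>y. ip d g (\<lambda>i. y i - x i)) \<longlongrightarrow> 0) (at x within vsp d)"
    unfolding ip_def by simp
  have "((\<lambda>y. sqrt (\<Sum>i=1..d. (y i - x i) * (y i - x i)))
      \<longlongrightarrow> sqrt (\<Sum>i=1..d. (x i - x i) * (x i - x i))) (at x within vsp d)"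
    by (intro tendsto_intros coord)
  then have nr: "((\<lambda>y. nrm d (\<lambda>i. y i - x i)) \<longlongrightarrow> 0) (at x within vsp d)"
    unfolding nrm_def ip_def by simp
  have "(r \<longlongrightarrow> 0) (at x within vsp d)"
    using has_grad_grad[OF sm x] unfolding has_grad_def r_def g_def by auto
  then have lim: "((\<lambda>y. F x + ip d g (\<lambda>i. y i - x i) + nrm d (\<lambda>i. y i - x i) * r y) \<longlongrightarrow> F x + 0 + 0 * 0)
      (at x within vsp d)"
    by (intro tendsto_add tendsto_mult tendsto_const lin nr)
  have ev: "\<forall>\<^sub>F y in at x within vsp d. F x + ip d g (\<lambda>i. y i - x i) + nrm d (\<lambda>i. y i - x i) * r y = F y"
    unfolding eventually_at_filter
  proof (rule always_eventually, intro allI impI)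
    fix y assume "y \<noteq> x" "y \<in> vsp d"
    then have "(\<lambda>i. y i - x i) \<noteq> (\<lambda>i. 0)" "(\<lambda>i. y i - x i) \<in> vsp d"
      using x by (auto simp: fun_eq_iff)
    then have "nrm d (\<lambda>i. y i - x i) \<noteq> 0"
      using ip_self_eq_0_iff ip_self_nonneg unfolding nrm_def by simp
    then show "F x + ip d g (\<lambda>i. y i - x i) + nrm d (\<lambda>i. y i - x i) * r y = F y"
      unfolding r_def by simp
  qed
  show "(F \<longlongrightarrow> F x) (at x within vsp d)"
    using tendsto_cong[OF ev] lim by simp
qed

lemma strongly_convex_coercive:
  assumes sm: "smooth_on d L F" and sc: "strongly_convex_on d \<mu> F" and \<mu>: "\<mu> > 0"
    and z: "z \<in> vsp d" and far: "nrm d z \<ge> 2 * nrm d (grad d F (\<lambda>i. 0)) / \<mu>"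
  shows "F (\<lambda>i. 0) \<le> F z"
proof -
  define g where "g = grad d F (\<lambda>i. 0)"
  have "(\<lambda>i. 0) \<in> vsp d" unfolding vsp_def by simp
  from strongly_convex_first_order[OF _ sc this z] has_grad_grad[OF sm]
  have "F (\<lambda>i. 0) + ip d g z + \<mu> / 2 * (nrm d z)\<^sup>2 \<le> F z"
    unfolding g_def by simp
  moreover have "nrm d g \<le> \<mu> / 2 * nrm d z"
    using far \<mu> by (simp add: g_def field_simps)
  from mult_right_mono[OF this nrm_nonneg]
  have "nrm d g * nrm d z \<le> \<mu> / 2 * (nrm d z)\<^sup>2"
    by (simp add: power2_eq_square mult.assoc)
  ultimately show ?thesis
    using minus_nrm_mult_le_ip[of d g z] by linarith
qed

lemma compact_vsp_box: "compact {z \<in> vsp d. \<forall>i\<in>{1..d}. \<bar>z i\<bar> \<le> R}"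
proof -
  define S where "S = (\<lambda>i. if i \<in> {1..d} then {-R..R} else {0::real})"
  have "compactin (product_topology (\<lambda>i. euclidean) UNIV) (PiE UNIV S)"
    unfolding compactin_PiE S_def by auto
  then have "compact (PiE UNIV S)"
    by (simp only: euclidean_product_topology compactin_euclidean_iff)
  moreover have "z \<in> vsp d \<and> (\<forall>i\<in>{1..d}. \<bar>z i\<bar> \<le> R) \<longleftrightarrow> (\<forall>i. z i \<in> S i)" for z
  proof -
    have "z i \<in> S i \<longleftrightarrow> (i \<notin> {1..d} \<longrightarrow> z i = 0) \<and> (i \<in> {1..d} \<longrightarrow> \<bar>z i\<bar> \<le> R)" for i
      unfolding S_def by (auto simp: abs_le_iff)
    then show ?thesis
      unfolding vsp_def by blast
  qed
  then have "{z \<in> vsp d. \<forall>i\<in>{1..d}. \<bar>z i\<bar> \<le> R} = PiE UNIV S"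
    by (auto simp: PiE_iff)
  ultimately show ?thesis
    by simp
qed

lemma strongly_convex_has_minimizer:
  assumes sm: "smooth_on d L F" and sc: "strongly_convex_on d \<mu> F" and \<mu>: "\<mu> > 0"
  shows "\<exists>p\<in>vsp d. \<forall>z\<in>vsp d. F p \<le> F z"
proof -
  define R where "R = 2 * nrm d (grad d F (\<lambda>i. 0)) / \<mu>"
  define K where "K = {z \<in> vsp d. \<forall>i\<in>{1..d}. \<bar>z i\<bar> \<le> R}"
  have "compact K"
    unfolding K_def by (rule compact_vsp_box)
  moreover have zero_K: "(\<lambda>i. 0) \<in> K"
    unfolding K_def R_def vsp_def using \<mu> nrm_nonneg by simp
  moreover have K_vsp: "K \<subseteq> vsp d"
    unfolding K_def by blast
  then have "continuous_on K F"
    by (rule continuous_on_subset[OF smooth_imp_continuous_on_vsp[OF sm]])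
  ultimately obtain p where p: "p \<in> K" and p_min: "\<forall>y\<in>K. F p \<le> F y"
    using continuous_attains_inf[of K F] by blast
  \<comment> \<open>Outside K, coercivity gives F z \<ge> F 0 \<ge> F p.\<close>
  have "F p \<le> F z" if z: "z \<in> vsp d" for z
  proof (cases "z \<in> K")
    case False
    then obtain i where "i \<in> {1..d}" "R < \<bar>z i\<bar>"
      using z unfolding K_def by (auto simp: not_le)
    then have "R \<le> nrm d z"
      using abs_coord_le_nrm[of i d z] by simp
    then have "F (\<lambda>i. 0) \<le> F z"
      unfolding R_def by (rule strongly_convex_coercive[OF sm sc \<mu> z])
    then show ?thesis
      using p_min zero_K order_trans by blast
  qed (use p_min in blast)
  then show ?thesis
    using p K_vsp by blast
qed

section \<open>Minimiser and gradient descent\<close>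

lemma gd_iter_0 [simp]: "gd_iter d F \<gamma> z0 0 = z0"
  unfolding gd_iter_def by simp

lemma gd_iter_Suc:
  "gd_iter d F \<gamma> z0 (Suc j) = (\<lambda>i. gd_iter d F \<gamma> z0 j i - \<gamma> * grad d F (gd_iter d F \<gamma> z0 j) i)"
  unfolding gd_iter_def by simp

lemma gd_iter_in_vsp:
  assumes "smooth_on d L F" and "z0 \<in> vsp d"
  shows "gd_iter d F \<gamma> z0 j \<in> vsp d"
proof (induction j)
  case (Suc j)
  then show ?case
    using grad_in_vsp[OF assms(1) Suc] unfolding gd_iter_Suc vsp_def by simp
qed (use assms(2) in simp)

locale smooth_strongly_convex =
  fixes d :: nat and L \<mu> :: real and F :: "(nat \<Rightarrow> real) \<Rightarrow> real"
  assumes smooth: "smooth_on d L F" and strongly_convex: "strongly_convex_on d \<mu> F"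
    and mu_pos: "0 < \<mu>" and L_pos: "0 < L"
begin

definition minimizer :: "nat \<Rightarrow> real" where
  "minimizer = (SOME p. p \<in> vsp d \<and> (\<forall>z\<in>vsp d. F p \<le> F z))"

lemma minimizer: "minimizer \<in> vsp d" "z \<in> vsp d \<Longrightarrow> F minimizer \<le> F z"
proof -
  have "\<exists>p. p \<in> vsp d \<and> (\<forall>z\<in>vsp d. F p \<le> F z)"
    using strongly_convex_has_minimizer[OF smooth strongly_convex mu_pos] by blast
  from someI_ex[OF this] show "minimizer \<in> vsp d" "z \<in> vsp d \<Longrightarrow> F minimizer \<le> F z"
    unfolding minimizer_def by auto
qed

lemma grad_minimizer: "grad d F minimizer = (\<lambda>i. 0)"
proof -
  define g where "g = grad d F minimizer"
  have g: "g \<in> vsp d"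
    unfolding g_def by (rule grad_in_vsp[OF smooth minimizer(1)])
  then have "(\<lambda>i. minimizer i - 1 / L * g i) \<in> vsp d"
    using minimizer(1) unfolding vsp_def by simp
  then have "F minimizer \<le> F (\<lambda>i. minimizer i - 1 / L * g i)"
    by (rule minimizer(2))
  also have "\<dots> \<le> F minimizer - ip d g g / (2 * L)"
    unfolding g_def by (rule smooth_gradient_step_decrease[OF smooth L_pos minimizer(1)])
  finally have "ip d g g = 0"
    using L_pos ip_self_nonneg[of d g] by (simp add: field_simps)
  then show ?thesis
    using ip_self_eq_0_iff[OF g] unfolding g_def by blast
qed

lemma suboptimality_lower_bound:
  "z \<in> vsp d \<Longrightarrow> \<mu> / 2 * ip d (\<lambda>i. z i - minimizer i) (\<lambda>i. z i - minimizer i) \<le> F z - F minimizer"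
  using strongly_convex_first_order[OF _ strongly_convex minimizer(1), of "grad d F" z]
    has_grad_grad[OF smooth] grad_minimizer
  by (simp add: power2_nrm)

lemma suboptimality_upper_bound:
  "z \<in> vsp d \<Longrightarrow> F z - F minimizer \<le> L / 2 * ip d (\<lambda>i. z i - minimizer i) (\<lambda>i. z i - minimizer i)"
  using smooth_quadratic_upper_bound[OF smooth minimizer(1), of z] L_pos grad_minimizer
  by (simp add: power2_nrm)

lemma mu_le_L: "1 \<le> d \<Longrightarrow> \<mu> \<le> L"
proof -
  assume d: "1 \<le> d"
  define e where "e = (\<lambda>i. minimizer i + (if i = 1 then 1 else 0 :: real))"
  have e: "e \<in> vsp d"
    using minimizer(1) d unfolding e_def vsp_def by auto
  have e_shift: "(\<lambda>i. e i - minimizer i) = (\<lambda>i. if i = 1 then 1 else 0)"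
    unfolding e_def by auto
  have "ip d (\<lambda>i. e i - minimizer i) (\<lambda>i. e i - minimizer i) = 1"
    unfolding e_shift ip_def using d by (simp add: if_distrib sum.delta cong: if_cong)
  then show ?thesis
    using suboptimality_lower_bound[OF e] suboptimality_upper_bound[OF e] by simp
qed

lemma constant_if_dim_0: "d = 0 \<Longrightarrow> z \<in> vsp d \<Longrightarrow> F z = F minimizer"
  using minimizer(1) by (simp add: vsp_0)

lemma polyak_lojasiewicz:
  assumes z: "z \<in> vsp d"
  shows "F z - F minimizer \<le> ip d (grad d F z) (grad d F z) / (2 * \<mu>)"
proof -
  define g where "g = grad d F z"
  define v where "v = (\<lambda>i. minimizer i - z i)"
  have "F z + ip d g v + \<mu> / 2 * ip d v v \<le> F minimizer"
    using strongly_convex_first_order[OF _ strongly_convex z minimizer(1)] has_grad_grad[OF smooth]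
    unfolding g_def v_def power2_nrm by blast
  moreover have "0 \<le> ip d (\<lambda>i. g i + \<mu> * v i) (\<lambda>i. g i + \<mu> * v i)"
    by (rule ip_self_nonneg)
  then have "0 \<le> ip d g g + 2 * \<mu> * ip d g v + \<mu>\<^sup>2 * ip d v v"
    by (simp add: ip_linear ip_commute[of d v g] power2_eq_square algebra_simps)
  then have "- ip d g g / (2 * \<mu>) \<le> ip d g v + \<mu> / 2 * ip d v v"
    using mu_pos by (simp add: power2_eq_square field_simps)
  ultimately show ?thesis
    unfolding g_def by (simp add: field_simps)
qed

lemma gradient_step_contraction:
  assumes z: "z \<in> vsp d"
  shows "F (\<lambda>i. z i - 1 / L * grad d F z i) - F minimizer \<le> (1 - \<mu> / L) * (F z - F minimizer)"
proof -
  define q where "q = ip d (grad d F z) (grad d F z)"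
  have "F (\<lambda>i. z i - 1 / L * grad d F z i) \<le> F z - q / (2 * L)"
    unfolding q_def by (rule smooth_gradient_step_decrease[OF smooth L_pos z])
  moreover have "2 * \<mu> * (F z - F minimizer) \<le> q"
    using polyak_lojasiewicz[OF z] mu_pos unfolding q_def by (simp add: field_simps)
  then have "(2 * \<mu> * (F z - F minimizer)) / (2 * L) \<le> q / (2 * L)"
    using L_pos by (intro divide_right_mono) auto
  then have "\<mu> / L * (F z - F minimizer) \<le> q / (2 * L)"
    by simp
  ultimately show ?thesis
    by (simp add: algebra_simps)
qed

lemma gd_suboptimality:
  assumes z0: "z0 \<in> vsp d"
  shows "F (gd_iter d F (1 / L) z0 K) - F minimizer \<le> (1 - \<mu> / L) ^ K * (F z0 - F minimizer)"
proof (cases "d = 0")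
  case True
  then show ?thesis
    using constant_if_dim_0 gd_iter_in_vsp[OF smooth z0] z0 by simp
next
  case False
  then have rate: "0 \<le> 1 - \<mu> / L"
    using mu_le_L L_pos by simp
  show ?thesis
  proof (induction K)
    case (Suc K)
    have "F (gd_iter d F (1 / L) z0 (Suc K)) - F minimizer
        \<le> (1 - \<mu> / L) * (F (gd_iter d F (1 / L) z0 K) - F minimizer)"
      unfolding gd_iter_Suc by (rule gradient_step_contraction[OF gd_iter_in_vsp[OF smooth z0]])
    also have "\<dots> \<le> (1 - \<mu> / L) * ((1 - \<mu> / L) ^ K * (F z0 - F minimizer))"
      by (rule mult_left_mono[OF Suc rate])
    finally show ?case
      by (simp add: mult.assoc)
  qed simp
qed

end

section \<open>Triple momentum\<close>

text \<open>If FX, FY, gX, gY are the values and gradients at X, Y of an L-smooth \<mu>-strongly convex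
  function, then interpolation_gap is nonnegative; the Lyapunov function of triple momentum
  is built from these gaps.\<close>

definition interpolation_gap :: "nat \<Rightarrow> real \<Rightarrow> real \<Rightarrow> (nat \<Rightarrow> real) \<Rightarrow> (nat \<Rightarrow> real)
    \<Rightarrow> real \<Rightarrow> real \<Rightarrow> (nat \<Rightarrow> real) \<Rightarrow> (nat \<Rightarrow> real) \<Rightarrow> real" where
  "interpolation_gap d L \<mu> X Y FX FY gX gY = 2 * (L - \<mu>) * (FX - FY - ip d gY (\<lambda>i. X i - Y i))
     - ip d (\<lambda>i. gX i - gY i) (\<lambda>i. gX i - gY i) - \<mu> * L * ip d (\<lambda>i. X i - Y i) (\<lambda>i. X i - Y i)
     + 2 * \<mu> * ip d (\<lambda>i. gX i - gY i) (\<lambda>i. X i - Y i)"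

lemma interpolation_gap_shift:
  "interpolation_gap d L \<mu> X Y FX FY gX gY
    = interpolation_gap d L \<mu> (\<lambda>i. X i - c i) (\<lambda>i. Y i - c i) (FX - a) (FY - a) gX gY"
proof -
  have "(\<lambda>i. (X i - c i) - (Y i - c i)) = (\<lambda>i. X i - Y i)"
    by auto
  then show ?thesis
    unfolding interpolation_gap_def by simp
qed

text \<open>As rewrite rules the next two lemmas loop unless X (resp. Y) is instantiated.\<close>

lemma interpolation_gap_center_right:
  "interpolation_gap d L \<mu> X Y FX FY gX gY
    = interpolation_gap d L \<mu> (\<lambda>i. X i - Y i) (\<lambda>i. 0) (FX - FY) 0 gX gY"
  using interpolation_gap_shift[of d L \<mu> X Y FX FY gX gY Y FY] by simp

lemma interpolation_gap_center_left:
  "interpolation_gap d L \<mu> X Y FX FY gX gY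
    = interpolation_gap d L \<mu> (\<lambda>i. 0) (\<lambda>i. Y i - X i) 0 (FY - FX) gX gY"
  using interpolation_gap_shift[of d L \<mu> X Y FX FY gX gY X FX] by simp

lemma interpolation_gap_nonneg:
  assumes sm: "smooth_on d L F" and sc: "strongly_convex_on d \<mu> F" and \<mu>: "0 \<le> \<mu>" "\<mu> \<le> L"
    and x: "X \<in> vsp d" and y: "Y \<in> vsp d"
  shows "0 \<le> interpolation_gap d L \<mu> X Y (F X) (F Y) (grad d F X) (grad d F Y)"
proof -
  define gx gy where "gx = grad d F X" and "gy = grad d F Y"
  define D e where "D = (\<lambda>i. gx i - gy i)" and "e = (\<lambda>i. X i - Y i)"
  have "ip d (\<lambda>i. D i - \<mu> * e i) (\<lambda>i. D i - \<mu> * e i)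
      \<le> 2 * (L - \<mu>) * (F X - F Y - ip d gy e - \<mu> / 2 * ip d e e)"
    using smooth_strongly_convex_interpolation[OF sm sc \<mu> x y]
    unfolding gx_def gy_def D_def e_def by (simp add: algebra_simps)
  moreover have "ip d (\<lambda>i. D i - \<mu> * e i) (\<lambda>i. D i - \<mu> * e i) = ip d D D - 2 * \<mu> * ip d D e + \<mu>\<^sup>2 * ip d e e"
    by (simp add: ip_linear ip_commute[of d e D] power2_eq_square algebra_simps)
  moreover have "interpolation_gap d L \<mu> X Y (F X) (F Y) gx gy
      = 2 * (L - \<mu>) * (F X - F Y - ip d gy e) - ip d D D - \<mu> * L * ip d e e + 2 * \<mu> * ip d D e"
    unfolding interpolation_gap_def D_def e_def ..
  ultimately show ?thesis
    unfolding gx_def gy_def by (simp add: power2_eq_square algebra_simps)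
qed

lemma tm_lyapunov_identity_polynomial:
  fixes A B V W :: "nat \<Rightarrow> real" and F0 F1 L s :: real
  assumes "Xk = (\<lambda>i. (1 + s) * A i)" "Ym = (\<lambda>i. (1 + s) * B i)"
    "U0 = (\<lambda>i. L * (1 + s) * V i)" "U1 = (\<lambda>i. L * s * (1 + s) * W i)"
    "Yk = (\<lambda>i. (1 - s) * B i + 2 * s * A i - (1 - s) * V i)"
    "Xn = (\<lambda>i. (1 - s) * Xk i + s * Yk i - (1 + s) * W i)"
  shows "(L * s\<^sup>2 * L * ip d Xn Xn + interpolation_gap d L (L * s\<^sup>2) Yk (\<lambda>i. 0) F1 0 U1 (\<lambda>i. 0) / 2)
       - (1 - s)\<^sup>2 * (L * s\<^sup>2 * L * ip d Xk Xk + interpolation_gap d L (L * s\<^sup>2) Ym (\<lambda>i. 0) F0 0 U0 (\<lambda>i. 0) / 2)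
       + (1 - s)\<^sup>2 / 2 * interpolation_gap d L (L * s\<^sup>2) Ym Yk F0 F1 U0 U1
       + (1 - (1 - s)\<^sup>2) / 2 * interpolation_gap d L (L * s\<^sup>2) (\<lambda>i. 0) Yk 0 F1 (\<lambda>i. 0) U1 = 0"
  unfolding interpolation_gap_def assms
  apply (simp only: ip_linear ip_zero_left ip_zero_right diff_zero mult_zero_right)
  apply (simp only: ip_commute[of d B A] ip_commute[of d V A] ip_commute[of d W A] ip_commute[of d V B]
       ip_commute[of d W B] ip_commute[of d W V])
  apply (simp add: field_simps power2_eq_square)
  done

text \<open>The same identity in terms of the triple momentum recursion, shifted by the minimiser:
  Xk, Xn are consecutive z-iterates, Ym, Yk consecutive y-iterates and U0, U1 the gradients at the
  y-iterates.\<close>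

lemma tm_lyapunov_identity:
  assumes s: "0 < s" and L: "0 < L"
    and Yk: "Yk = (\<lambda>i. ((1 - s) * Ym i + 2 * s * Xk i - (1 - s) / L * U0 i) / (1 + s))"
    and Xn: "Xn = (\<lambda>i. (1 - s) * Xk i + s * Yk i - U1 i / (L * s))"
  shows "(L * s\<^sup>2 * L * ip d Xn Xn + interpolation_gap d L (L * s\<^sup>2) Yk (\<lambda>i. 0) F1 0 U1 (\<lambda>i. 0) / 2)
       - (1 - s)\<^sup>2 * (L * s\<^sup>2 * L * ip d Xk Xk + interpolation_gap d L (L * s\<^sup>2) Ym (\<lambda>i. 0) F0 0 U0 (\<lambda>i. 0) / 2)
       + (1 - s)\<^sup>2 / 2 * interpolation_gap d L (L * s\<^sup>2) Ym Yk F0 F1 U0 U1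
       + (1 - (1 - s)\<^sup>2) / 2 * interpolation_gap d L (L * s\<^sup>2) (\<lambda>i. 0) Yk 0 F1 (\<lambda>i. 0) U1 = 0"
proof (rule tm_lyapunov_identity_polynomial)
  have nz: "1 + s \<noteq> 0" "s \<noteq> 0" "L \<noteq> 0"
    using s L by auto
  define A B V W where "A = (\<lambda>i. Xk i / (1 + s))" and "B = (\<lambda>i. Ym i / (1 + s))"
    and "V = (\<lambda>i. U0 i / (L * (1 + s)))" and "W = (\<lambda>i. U1 i / (L * s * (1 + s)))"
  show "Xk = (\<lambda>i. (1 + s) * A i)" "Ym = (\<lambda>i. (1 + s) * B i)"
    "U0 = (\<lambda>i. L * (1 + s) * V i)" "U1 = (\<lambda>i. L * s * (1 + s) * W i)"
    unfolding A_def B_def V_def W_def using nz by auto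
  show "Yk = (\<lambda>i. (1 - s) * B i + 2 * s * A i - (1 - s) * V i)"
    unfolding Yk A_def B_def V_def using nz by (auto simp: divide_simps)
  show "Xn = (\<lambda>i. (1 - s) * Xk i + s * Yk i - (1 + s) * W i)"
    unfolding Xn W_def using nz by (auto simp: divide_simps)
qed

lemma tm_initial_identity:
  fixes X V :: "nat \<Rightarrow> real" and F L s :: real
  assumes U: "U = (\<lambda>i. s * L * V i)" and X1: "X1 = (\<lambda>i. X i - V i)"
  shows "(1 + s) * ((1 - s)\<^sup>2 * L\<^sup>2 * ip d X X - L * s\<^sup>2 * L * ip d X1 X1
        - interpolation_gap d L (L * s\<^sup>2) X (\<lambda>i. 0) F 0 U (\<lambda>i. 0) / 2)
     = interpolation_gap d L (L * s\<^sup>2) (\<lambda>i. 0) X 0 F (\<lambda>i. 0) U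
       + (1 - s) / 2 * interpolation_gap d L (L * s\<^sup>2) X (\<lambda>i. 0) F 0 U (\<lambda>i. 0)
       + (1 - s) * L\<^sup>2 * ip d (\<lambda>i. s * V i - X i) (\<lambda>i. s * V i - X i)"
  unfolding interpolation_gap_def U X1
  apply (simp only: ip_linear ip_zero_left ip_zero_right diff_zero mult_zero_right)
  apply (simp only: ip_commute[of d V X])
  apply (simp add: field_simps power2_eq_square)
  done

text \<open>The stepsizes of the theorem, written with s = 1 - \<phi> = 1 / sqrt (L / \<mu>), turn the
  triple momentum recursion into the two recursions below.\<close>

lemma tm_stepsize_identities:
  fixes w wp u p s L :: real
  assumes s: "0 < s" "s \<le> 1" and L: "L > 0"
  defines "gw \<equiv> (1 - s)\<^sup>2 / (1 + s)" and "gy \<equiv> (1 - s)\<^sup>2 / ((2 - s) * (1 + s))"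
    and "gz \<equiv> (1 - s)\<^sup>2 / (s * (2 - s))" and "gc \<equiv> (2 - s) / L"
  shows "(1 + gy) * ((1 + gw) * w - gw * wp - gc * u) - gy * w - p
      = ((1 - s) * ((1 + gy) * w - gy * wp - p)
         + 2 * s * ((1 + gz) * ((1 + gw) * w - gw * wp - gc * u) - gz * w - p) - (1 - s) / L * u) / (1 + s)"
    and "(1 + gz) * ((1 + gw) * w - gw * wp - gc * u) - gz * w - p
      = (1 - s) * ((1 + gz) * w - gz * wp - p) + s * ((1 + gy) * w - gy * wp - p) - u / (L * s)"
proof -
  have nz: "1 + s \<noteq> 0" "2 - s \<noteq> 0" "s \<noteq> 0" "L \<noteq> 0"
    using s L by auto
  show "(1 + gy) * ((1 + gw) * w - gw * wp - gc * u) - gy * w - p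
      = ((1 - s) * ((1 + gy) * w - gy * wp - p)
         + 2 * s * ((1 + gz) * ((1 + gw) * w - gw * wp - gc * u) - gz * w - p) - (1 - s) / L * u) / (1 + s)"
    unfolding assms(4-7) using nz by (simp add: divide_simps) (simp add: algebra_simps power2_eq_square)
  show "(1 + gz) * ((1 + gw) * w - gw * wp - gc * u) - gz * w - p
      = (1 - s) * ((1 + gz) * w - gz * wp - p) + s * ((1 + gy) * w - gy * wp - p) - u / (L * s)"
    unfolding assms(4-7) using nz by (simp add: divide_simps) (simp add: algebra_simps power2_eq_square)
qed

lemma tm_z_in_vsp:
  assumes sm: "smooth_on d L F" and z0: "z0 \<in> vsp d"
  shows "tm_z d F gc gw gy gz z0 j \<in> vsp d"
proof -
  have "fst (tm_st d F gc gw gy z0 j) \<in> vsp d \<and> fst (snd (tm_st d F gc gw gy z0 j)) \<in> vsp d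
      \<and> snd (snd (tm_st d F gc gw gy z0 j)) \<in> vsp d"
  proof (induction j)
    case (Suc j)
    obtain w wp y where e: "tm_st d F gc gw gy z0 j = (w, wp, y)"
      by (metis prod_cases3)
    have "grad d F y \<in> vsp d"
      using grad_in_vsp[OF sm] Suc e by simp
    then show ?case
      using Suc e unfolding vsp_def by (simp add: Let_def)
  qed (use z0 in simp)
  moreover obtain w wp y where "tm_st d F gc gw gy z0 j = (w, wp, y)"
    by (metis prod_cases3)
  ultimately show ?thesis
    unfolding tm_z_def vsp_def by simp
qed

context smooth_strongly_convex
begin

context
  fixes s gc gw gy gz :: real and z0 :: "nat \<Rightarrow> real"
  assumes z0: "z0 \<in> vsp d" and s: "0 < s" "s \<le> 1" and mu_eq: "\<mu> = L * s\<^sup>2"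
    and gc: "gc = (1 + (1 - s)) / L" and gw: "gw = (1 - s)\<^sup>2 / (2 - (1 - s))"
    and gy: "gy = (1 - s)\<^sup>2 / ((1 + (1 - s)) * (2 - (1 - s)))"
    and gz: "gz = (1 - s)\<^sup>2 / (1 - (1 - s)\<^sup>2)"
begin

definition omega :: "nat \<Rightarrow> nat \<Rightarrow> real" where
  "omega j = fst (tm_st d F gc gw gy z0 j)"

definition omega_prev :: "nat \<Rightarrow> nat \<Rightarrow> real" where
  "omega_prev j = fst (snd (tm_st d F gc gw gy z0 j))"

definition y_tm :: "nat \<Rightarrow> nat \<Rightarrow> real" where
  "y_tm j = snd (snd (tm_st d F gc gw gy z0 j))"

abbreviation z_tm :: "nat \<Rightarrow> nat \<Rightarrow> real" where
  "z_tm j \<equiv> tm_z d F gc gw gy gz z0 j"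

lemma tm_state_0: "omega 0 = z0" "omega_prev 0 = z0" "y_tm 0 = z0"
  unfolding omega_def omega_prev_def y_tm_def by simp_all

lemma tm_state_Suc:
  "omega (Suc j) = (\<lambda>i. (1 + gw) * omega j i - gw * omega_prev j i - gc * grad d F (y_tm j) i)"
  "omega_prev (Suc j) = omega j"
  "y_tm (Suc j) = (\<lambda>i. (1 + gy) * omega (Suc j) i - gy * omega j i)"
proof -
  obtain w wp y where "tm_st d F gc gw gy z0 j = (w, wp, y)"
    by (metis prod_cases3)
  then show "omega (Suc j) = (\<lambda>i. (1 + gw) * omega j i - gw * omega_prev j i - gc * grad d F (y_tm j) i)"
    "omega_prev (Suc j) = omega j" "y_tm (Suc j) = (\<lambda>i. (1 + gy) * omega (Suc j) i - gy * omega j i)"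
    unfolding omega_def omega_prev_def y_tm_def by (simp_all add: Let_def)
qed

lemma z_tm_eq: "z_tm j = (\<lambda>i. (1 + gz) * omega j i - gz * omega_prev j i)"
proof -
  obtain w wp y where "tm_st d F gc gw gy z0 j = (w, wp, y)"
    by (metis prod_cases3)
  then show ?thesis
    unfolding tm_z_def omega_def omega_prev_def by simp
qed

lemma y_tm_eq: "y_tm j = (\<lambda>i. (1 + gy) * omega j i - gy * omega_prev j i)"
  by (cases j) (simp_all add: tm_state_0 tm_state_Suc algebra_simps)

lemma z_tm_0: "z_tm 0 = z0"
  unfolding z_tm_eq tm_state_0 by (simp add: algebra_simps)

lemma y_tm_in_vsp: "y_tm j \<in> vsp d"
proof -
  have "omega j \<in> vsp d \<and> omega_prev j \<in> vsp d"
  proof (induction j)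
    case (Suc j)
    then have "y_tm j \<in> vsp d"
      unfolding y_tm_eq vsp_def by simp
    then show ?case
      using Suc grad_in_vsp[OF smooth] unfolding tm_state_Suc vsp_def by simp
  qed (simp add: tm_state_0 z0)
  then show ?thesis
    unfolding y_tm_eq vsp_def by simp
qed

lemma mu_le_L_of_s: "\<mu> \<le> L"
  using mu_eq L_pos s power_le_one[of s 2] mult_left_le[of "s\<^sup>2" L] by simp

lemma interpolation_gap_nonneg_F:
  "X \<in> vsp d \<Longrightarrow> Y \<in> vsp d \<Longrightarrow> 0 \<le> interpolation_gap d L \<mu> X Y (F X) (F Y) (grad d F X) (grad d F Y)"
  using interpolation_gap_nonneg[OF smooth strongly_convex _ mu_le_L_of_s] mu_pos by simp

lemma tm_centered_recursion:
  fixes p :: "nat \<Rightarrow> real"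
  shows "y_tm (Suc j) i - p i = ((1 - s) * (y_tm j i - p i) + 2 * s * (z_tm (Suc j) i - p i)
      - (1 - s) / L * grad d F (y_tm j) i) / (1 + s)"
    and "z_tm (Suc j) i - p i
      = (1 - s) * (z_tm j i - p i) + s * (y_tm j i - p i) - grad d F (y_tm j) i / (L * s)"
proof -
  have "1 - (1 - s)\<^sup>2 = s * (2 - s)"
    by (simp add: power2_eq_square algebra_simps)
  then have stepsizes: "gw = (1 - s)\<^sup>2 / (1 + s)" "gy = (1 - s)\<^sup>2 / ((2 - s) * (1 + s))"
    "gz = (1 - s)\<^sup>2 / (s * (2 - s))" "gc = (2 - s) / L"
    using gw gy gz gc by (simp_all add: mult.commute)
  note identities = tm_stepsize_identities[OF s L_pos, folded stepsizes]
  show "y_tm (Suc j) i - p i = ((1 - s) * (y_tm j i - p i) + 2 * s * (z_tm (Suc j) i - p i)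
      - (1 - s) / L * grad d F (y_tm j) i) / (1 + s)"
    unfolding tm_state_Suc y_tm_eq[of j] z_tm_eq by (simp add: identities(1))
  show "z_tm (Suc j) i - p i
      = (1 - s) * (z_tm j i - p i) + s * (y_tm j i - p i) - grad d F (y_tm j) i / (L * s)"
    unfolding tm_state_Suc y_tm_eq[of j] z_tm_eq by (simp add: identities(2))
qed

text \<open>The Lyapunov function of the triple momentum method (Van Scoy, Freeman and Lynch).\<close>

definition lyapunov :: "nat \<Rightarrow> real" where
  "lyapunov j = \<mu> * L * ip d (\<lambda>i. z_tm (Suc j) i - minimizer i) (\<lambda>i. z_tm (Suc j) i - minimizer i)
     + interpolation_gap d L \<mu> (y_tm j) minimizer (F (y_tm j)) (F minimizer) (grad d F (y_tm j)) (\<lambda>i. 0) / 2"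

lemma lyapunov_Suc_le: "lyapunov (Suc j) \<le> (1 - s)\<^sup>2 * lyapunov j"
proof -
  define p where "p = minimizer"
  define Xk Xn where "Xk = (\<lambda>i. z_tm (Suc j) i - p i)" and "Xn = (\<lambda>i. z_tm (Suc (Suc j)) i - p i)"
  define Ym Yk where "Ym = (\<lambda>i. y_tm j i - p i)" and "Yk = (\<lambda>i. y_tm (Suc j) i - p i)"
  define U0 U1 where "U0 = grad d F (y_tm j)" and "U1 = grad d F (y_tm (Suc j))"
  define F0 F1 where "F0 = F (y_tm j) - F p" and "F1 = F (y_tm (Suc j)) - F p"
  have Yk: "Yk = (\<lambda>i. ((1 - s) * Ym i + 2 * s * Xk i - (1 - s) / L * U0 i) / (1 + s))"
    unfolding Xk_def Ym_def Yk_def U0_def by (rule ext, rule tm_centered_recursion(1))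
  have Xn: "Xn = (\<lambda>i. (1 - s) * Xk i + s * Yk i - U1 i / (L * s))"
    unfolding Xk_def Xn_def Yk_def U1_def by (rule ext, rule tm_centered_recursion(2))
  note identity = tm_lyapunov_identity[OF s(1) L_pos Yk Xn, of d F1 F0, folded mu_eq]
  have lyapunov_eqs:
    "lyapunov (Suc j) = \<mu> * L * ip d Xn Xn + interpolation_gap d L \<mu> Yk (\<lambda>i. 0) F1 0 U1 (\<lambda>i. 0) / 2"
    "lyapunov j = \<mu> * L * ip d Xk Xk + interpolation_gap d L \<mu> Ym (\<lambda>i. 0) F0 0 U0 (\<lambda>i. 0) / 2"
    unfolding lyapunov_def Xn_def Xk_def Yk_def Ym_def F0_def F1_def U0_def U1_def p_def
      interpolation_gap_center_right[where Y = minimizer] by simp_all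
  have "0 \<le> interpolation_gap d L \<mu> Ym Yk F0 F1 U0 U1"
    using interpolation_gap_nonneg_F[OF y_tm_in_vsp y_tm_in_vsp, of j "Suc j"]
    unfolding interpolation_gap_shift[of d L \<mu> "y_tm j" "y_tm (Suc j)" "F (y_tm j)" "F (y_tm (Suc j))"
        "grad d F (y_tm j)" "grad d F (y_tm (Suc j))" p "F p"]
    unfolding Ym_def Yk_def F0_def F1_def U0_def U1_def .
  then have "0 \<le> (1 - s)\<^sup>2 / 2 * interpolation_gap d L \<mu> Ym Yk F0 F1 U0 U1"
    by simp
  moreover have "0 \<le> interpolation_gap d L \<mu> (\<lambda>i. 0) Yk 0 F1 (\<lambda>i. 0) U1"
    using interpolation_gap_nonneg_F[OF minimizer(1) y_tm_in_vsp, of "Suc j"]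
    unfolding interpolation_gap_center_left[where X = minimizer] grad_minimizer Yk_def F1_def U1_def p_def .
  moreover have "0 \<le> 1 - (1 - s)\<^sup>2"
    using s power_le_one[of "1 - s" 2] by simp
  ultimately have "0 \<le> (1 - (1 - s)\<^sup>2) / 2 * interpolation_gap d L \<mu> (\<lambda>i. 0) Yk 0 F1 (\<lambda>i. 0) U1
      + (1 - s)\<^sup>2 / 2 * interpolation_gap d L \<mu> Ym Yk F0 F1 U0 U1"
    by simp
  then show ?thesis
    using identity unfolding lyapunov_eqs by linarith
qed

lemma lyapunov_0_le:
  "lyapunov 0 \<le> (1 - s)\<^sup>2 * L\<^sup>2 * ip d (\<lambda>i. z0 i - minimizer i) (\<lambda>i. z0 i - minimizer i)"
proof -
  define X where "X = (\<lambda>i. z0 i - minimizer i)"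
  define U where "U = grad d F z0"
  define V where "V = (\<lambda>i. U i / (L * s))"
  define X1 where "X1 = (\<lambda>i. X i - V i)"
  define G where "G = F z0 - F minimizer"
  have U: "U = (\<lambda>i. s * L * V i)"
    unfolding V_def using s L_pos by auto
  have X1: "(\<lambda>i. z_tm (Suc 0) i - minimizer i) = X1"
  proof
    fix i
    show "z_tm (Suc 0) i - minimizer i = X1 i"
      using tm_centered_recursion(2)[of 0 i minimizer]
      unfolding z_tm_0 tm_state_0 X1_def X_def V_def U_def by (simp add: algebra_simps)
  qed
  note identity = tm_initial_identity[OF U X1_def, of d G, folded mu_eq]
  have "0 \<le> interpolation_gap d L \<mu> (\<lambda>i. 0) X 0 G (\<lambda>i. 0) U"
    using interpolation_gap_nonneg_F[OF minimizer(1) z0]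
    unfolding interpolation_gap_center_left[where X = minimizer] grad_minimizer X_def G_def U_def .
  moreover have "0 \<le> interpolation_gap d L \<mu> X (\<lambda>i. 0) G 0 U (\<lambda>i. 0)"
    using interpolation_gap_nonneg_F[OF z0 minimizer(1)]
    unfolding interpolation_gap_center_right[where Y = minimizer] grad_minimizer X_def G_def U_def .
  then have "0 \<le> (1 - s) / 2 * interpolation_gap d L \<mu> X (\<lambda>i. 0) G 0 U (\<lambda>i. 0)"
    using s by simp
  moreover have "0 \<le> (1 - s) * L\<^sup>2 * ip d (\<lambda>i. s * V i - X i) (\<lambda>i. s * V i - X i)"
    using s ip_self_nonneg by simp
  ultimately have "0 \<le> (1 + s) * ((1 - s)\<^sup>2 * L\<^sup>2 * ip d X X - \<mu> * L * ip d X1 X1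
      - interpolation_gap d L \<mu> X (\<lambda>i. 0) G 0 U (\<lambda>i. 0) / 2)"
    using identity by linarith
  then have "0 \<le> (1 - s)\<^sup>2 * L\<^sup>2 * ip d X X - \<mu> * L * ip d X1 X1
      - interpolation_gap d L \<mu> X (\<lambda>i. 0) G 0 U (\<lambda>i. 0) / 2"
    using s by (simp add: zero_le_mult_iff)
  moreover have "lyapunov 0 = \<mu> * L * ip d X1 X1 + interpolation_gap d L \<mu> X (\<lambda>i. 0) G 0 U (\<lambda>i. 0) / 2"
    unfolding lyapunov_def X1 interpolation_gap_center_right[where Y = minimizer] tm_state_0
      X_def G_def U_def ..
  ultimately show ?thesis
    unfolding X_def by linarith
qed

lemma lyapunov_le_power: "lyapunov j \<le> ((1 - s)\<^sup>2) ^ j * lyapunov 0"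
proof (induction j)
  case (Suc j)
  have "lyapunov (Suc j) \<le> (1 - s)\<^sup>2 * lyapunov j"
    by (rule lyapunov_Suc_le)
  also have "\<dots> \<le> (1 - s)\<^sup>2 * (((1 - s)\<^sup>2) ^ j * lyapunov 0)"
    by (rule mult_left_mono[OF Suc]) simp
  finally show ?case
    by (simp add: mult.assoc)
qed simp

lemma dist_z_tm_le_lyapunov:
  "\<mu> * L * ip d (\<lambda>i. z_tm (Suc j) i - minimizer i) (\<lambda>i. z_tm (Suc j) i - minimizer i) \<le> lyapunov j"
  using interpolation_gap_nonneg_F[OF y_tm_in_vsp minimizer(1), of j]
  unfolding lyapunov_def grad_minimizer by simp

lemma tm_suboptimality:
  "F (z_tm K) - F minimizer \<le> (L / \<mu>)\<^sup>2 * (1 - s) ^ (2 * K) * (F z0 - F minimizer)"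
proof (cases K)
  case 0
  have "1 \<le> L / \<mu>"
    using mu_le_L_of_s mu_pos by simp
  then have "1 \<le> (L / \<mu>)\<^sup>2"
    by (simp add: one_le_power)
  then show ?thesis
    using 0 z_tm_0 minimizer(2)[OF z0] by (simp add: mult_le_cancel_right1)
next
  case (Suc j)
  define E where "E = ip d (\<lambda>i. z_tm (Suc j) i - minimizer i) (\<lambda>i. z_tm (Suc j) i - minimizer i)"
  define E0 where "E0 = ip d (\<lambda>i. z0 i - minimizer i) (\<lambda>i. z0 i - minimizer i)"
  define r where "r = ((1 - s)\<^sup>2) ^ Suc j"
  \<comment> \<open>Suboptimality is sandwiched between \<mu>/2 and L/2 times the squared distance to the minimiser.\<close>
  have "\<mu> * L * E \<le> ((1 - s)\<^sup>2) ^ j * lyapunov 0"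
    unfolding E_def using dist_z_tm_le_lyapunov lyapunov_le_power order_trans by blast
  also have "\<dots> \<le> ((1 - s)\<^sup>2) ^ j * ((1 - s)\<^sup>2 * L\<^sup>2 * E0)"
    unfolding E0_def by (rule mult_left_mono[OF lyapunov_0_le]) simp
  also have "\<dots> = r * L\<^sup>2 * E0"
    unfolding r_def by (simp add: algebra_simps)
  finally have contraction: "\<mu> * L * E \<le> r * L\<^sup>2 * E0" .
  have "F (z_tm K) - F minimizer \<le> L / 2 * E"
    unfolding Suc E_def by (rule suboptimality_upper_bound[OF tm_z_in_vsp[OF smooth z0]])
  also have "\<dots> = (\<mu> * L * E) / (2 * \<mu>)"
    using mu_pos by (simp add: field_simps)
  also have "\<dots> \<le> (r * L\<^sup>2 * E0) / (2 * \<mu>)"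
    by (rule divide_right_mono[OF contraction]) (use mu_pos in simp)
  also have "\<dots> = r * (L / \<mu>)\<^sup>2 * (\<mu> / 2 * E0)"
    using mu_pos by (simp add: power2_eq_square field_simps)
  also have "\<dots> \<le> r * (L / \<mu>)\<^sup>2 * (F z0 - F minimizer)"
    unfolding E0_def by (rule mult_left_mono[OF suboptimality_lower_bound[OF z0]]) (simp add: r_def)
  also have "\<dots> = (L / \<mu>)\<^sup>2 * (1 - s) ^ (2 * K) * (F z0 - F minimizer)"
    unfolding r_def Suc power_mult by (simp add: mult.commute mult.left_commute)
  finally show ?thesis .
qed

end

lemma gd_regret_bound:
  assumes z0: "z0 \<in> vsp d"
  shows "F (gd_iter d F (1 / L) z0 K) - F minimizer
    \<le> L / \<mu> * ((L / \<mu> - 1) / (L / \<mu>)) ^ K * (F z0 - F minimizer)"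
proof (cases "d = 0")
  case True
  then show ?thesis
    using constant_if_dim_0 gd_iter_in_vsp[OF smooth z0] z0 by simp
next
  case False
  then have "\<mu> \<le> L"
    using mu_le_L by simp
  then have "1 \<le> L / \<mu>" and "0 \<le> (1 - \<mu> / L) ^ K * (F z0 - F minimizer)"
    using mu_pos L_pos minimizer(2)[OF z0] by simp_all
  then have "(1 - \<mu> / L) ^ K * (F z0 - F minimizer) \<le> L / \<mu> * ((1 - \<mu> / L) ^ K * (F z0 - F minimizer))"
    by (simp add: mult_le_cancel_right1 mult_right_mono[of 1 "L / \<mu>", simplified])
  moreover have "(L / \<mu> - 1) / (L / \<mu>) = 1 - \<mu> / L"
    using mu_pos L_pos by (simp add: field_simps)
  ultimately show ?thesis
    using gd_suboptimality[OF z0, of K] by (simp add: mult.assoc)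
qed

lemma tm_regret_bound:
  assumes z0: "z0 \<in> vsp d"
  defines "\<phi> \<equiv> 1 - 1 / sqrt (L / \<mu>)"
  shows "F (tm_z d F ((1 + \<phi>) / L) (\<phi>\<^sup>2 / (2 - \<phi>)) (\<phi>\<^sup>2 / ((1 + \<phi>) * (2 - \<phi>))) (\<phi>\<^sup>2 / (1 - \<phi>\<^sup>2)) z0 K)
      - F minimizer \<le> (L / \<mu>)\<^sup>2 * ((sqrt (L / \<mu>) - 1) / sqrt (L / \<mu>)) ^ (2 * K) * (F z0 - F minimizer)"
proof (cases "d = 0")
  case True
  then show ?thesis
    using constant_if_dim_0 tm_z_in_vsp[OF smooth z0] z0 by simp
next
  case False
  define s where "s = 1 / sqrt (L / \<mu>)"
  have "\<mu> \<le> L"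
    using False mu_le_L by simp
  then have s: "0 < s" "s \<le> 1"
    unfolding s_def using mu_pos L_pos by simp_all
  have "\<mu> = L * s\<^sup>2"
    unfolding s_def using mu_pos L_pos by (simp add: power_divide real_sqrt_divide field_simps)
  from tm_suboptimality[OF z0 s this refl refl refl refl, of K]
  have "F (tm_z d F ((1 + (1 - s)) / L) ((1 - s)\<^sup>2 / (2 - (1 - s))) ((1 - s)\<^sup>2 / ((1 + (1 - s)) * (2 - (1 - s))))
      ((1 - s)\<^sup>2 / (1 - (1 - s)\<^sup>2)) z0 K) - F minimizer \<le> (L / \<mu>)\<^sup>2 * (1 - s) ^ (2 * K) * (F z0 - F minimizer)" .
  moreover have "(sqrt (L / \<mu>) - 1) / sqrt (L / \<mu>) = 1 - s"
    unfolding s_def using mu_pos L_pos by (simp add: field_simps)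
  ultimately show ?thesis
    unfolding \<phi>_def s_def by simp
qed

end

section \<open>Trajectories as functions of z\<close>

locale canonical_system =
  fixes n m :: nat and k :: "nat \<Rightarrow> nat" and A B :: "nat \<Rightarrow> nat \<Rightarrow> real"
  assumes canonical: "canonical_form n m k A B"
begin

lemma k_0: "k 0 = 0" and k_m: "k m = n" and k_Suc_gt: "j < m \<Longrightarrow> k j < k (Suc j)"
  and A_row_not_I: "i \<in> {1..n} \<Longrightarrow> i \<notin> k ` {1..m} \<Longrightarrow> l \<in> {1..n} \<Longrightarrow> A i l = (if l = i + 1 then 1 else 0)"
  and B_entry: "i \<in> {1..n} \<Longrightarrow> j \<in> {1..m} \<Longrightarrow> B i j = (if i = k j then 1 else 0)"
  using canonical unfolding canonical_form_def by auto

lemma k_strict_mono: "j1 < j2 \<Longrightarrow> j2 \<le> m \<Longrightarrow> k j1 < k j2"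
proof (induction j2)
  case (Suc j)
  then show ?case
    using k_Suc_gt[of j] by (cases "j1 = j") auto
qed simp

lemma k_mono: "j1 \<le> j2 \<Longrightarrow> j2 \<le> m \<Longrightarrow> k j1 \<le> k j2"
  using k_strict_mono by (cases "j1 = j2") (auto intro: less_imp_le)

lemma k_in_range: "j \<in> {1..m} \<Longrightarrow> k j \<in> {1..n}"
  using k_strict_mono[of 0 j] k_mono[of j m] k_0 k_m by auto

lemma k_inj: "j1 \<le> m \<Longrightarrow> j2 \<le> m \<Longrightarrow> k j1 = k j2 \<Longrightarrow> j1 = j2"
  by (metis k_strict_mono nat_neq_iff less_irrefl)

lemma blk_eqI: "1 \<le> j \<Longrightarrow> j \<le> m \<Longrightarrow> k (j - 1) < i \<Longrightarrow> i \<le> k j \<Longrightarrow> blk k i = j"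
  unfolding blk_def
proof (rule Least_equality)
  fix y assume j: "1 \<le> j" "j \<le> m" "k (j - 1) < i" and y: "i \<le> k y"
  show "j \<le> y"
  proof (rule ccontr)
    assume "\<not> j \<le> y"
    then have "k y \<le> k (j - 1)"
      using j by (intro k_mono) auto
    then show False
      using j y by simp
  qed
qed

lemma blk_bounds:
  assumes i: "i \<in> {1..n}"
  shows "1 \<le> blk k i" "blk k i \<le> m" "k (blk k i - 1) < i" "i \<le> k (blk k i)"
proof -
  have ex: "i \<le> k m"
    using i k_m by simp
  show le: "i \<le> k (blk k i)"
    unfolding blk_def by (rule LeastI[of "\<lambda>j. i \<le> k j", OF ex])
  show "blk k i \<le> m"
    unfolding blk_def by (rule Least_le[of "\<lambda>j. i \<le> k j", OF ex])
  show pos: "1 \<le> blk k i"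
    using le i k_0 by (cases "blk k i") auto
  show "k (blk k i - 1) < i"
  proof (rule ccontr)
    assume "\<not> k (blk k i - 1) < i"
    then have "blk k i \<le> blk k i - 1"
      unfolding blk_def by (intro Least_le) simp
    then show False
      using pos by simp
  qed
qed

lemma blk_k: "j \<in> {1..m} \<Longrightarrow> blk k (k j) = j"
  by (rule blk_eqI) (auto intro: k_strict_mono)

text \<open>Outside \<open>k ` {1..m}\<close> the next coordinate lies in the same block, so A shifts the state.\<close>

lemma Suc_in_block:
  assumes i: "i \<in> {1..n}" and not_I: "i \<notin> k ` {1..m}"
  shows "i + 1 \<in> {1..n}" "blk k (i + 1) = blk k i"
proof -
  define j where "j = blk k i"
  have j: "1 \<le> j" "j \<le> m" "k (j - 1) < i" "i \<le> k j"
    using blk_bounds[OF i] unfolding j_def by auto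
  then have "i < k j"
    using not_I by (metis atLeastAtMost_iff image_eqI le_neq_implies_less)
  moreover have "k j \<le> n"
    using k_in_range[of j] j by simp
  ultimately show "i + 1 \<in> {1..n}" "blk k (i + 1) = blk k i"
    using j unfolding j_def by (auto intro: blk_eqI)
qed

lemma xz_Suc_not_I: "i \<in> {1..n} \<Longrightarrow> i \<notin> k ` {1..m} \<Longrightarrow> xz n m k Z (Suc t) i = xz n m k Z t (i + 1)"
  using Suc_in_block[of i] unfolding xz_def by (simp add: algebra_simps)

lemma xz_k: "j \<in> {1..m} \<Longrightarrow> xz n m k Z t (k j) = zc m Z (int t) j"
  unfolding xz_def using k_in_range blk_k by simp

lemma xz_0: "xz n m k Z 0 = (\<lambda>_. 0)"
proof
  fix i
  show "xz n m k Z 0 i = 0"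
    using blk_bounds(4)[of i] unfolding xz_def zc_def by auto
qed

lemma xz_in_vsp: "xz n m k Z t \<in> vsp n"
  unfolding xz_def vsp_def by simp

lemma uz_in_vsp: "uz n m k A Z t \<in> vsp m"
  unfolding uz_def vsp_def by simp

lemma A_row_not_I_sum:
  assumes i: "i \<in> {1..n}" and not_I: "i \<notin> k ` {1..m}"
  shows "(\<Sum>l=1..n. A i l * v l) = v (i + 1)"
proof -
  have "(\<Sum>l=1..n. A i l * v l) = (\<Sum>l=1..n. if l = i + 1 then v l else 0)"
    by (rule sum.cong) (auto simp: A_row_not_I[OF i not_I])
  also have "\<dots> = v (i + 1)"
    using Suc_in_block(1)[OF i not_I] by (simp add: sum.delta)
  finally show ?thesis .
qed

lemma B_row_not_I_sum: "i \<in> {1..n} \<Longrightarrow> i \<notin> k ` {1..m} \<Longrightarrow> (\<Sum>j=1..m. B i j * w j) = 0"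
  by (rule sum.neutral) (auto simp: B_entry)

lemma B_row_k_sum:
  assumes j0: "j0 \<in> {1..m}"
  shows "(\<Sum>j=1..m. B (k j0) j * w j) = w j0"
proof -
  have "(\<Sum>j=1..m. B (k j0) j * w j) = (\<Sum>j=1..m. if j = j0 then w j else 0)"
  proof (rule sum.cong)
    fix j assume j: "j \<in> {1..m}"
    then have "k j0 = k j \<longleftrightarrow> j = j0"
      using k_inj[of j0 j] j0 by auto
    then show "B (k j0) j * w j = (if j = j0 then w j else 0)"
      using B_entry[OF k_in_range[OF j0] j] by simp
  qed simp
  also have "\<dots> = w j0"
    using j0 by (simp add: sum.delta')
  finally show ?thesis .
qed

lemma feasible_xz_uz: "feasible n m N A B (xz n m k Z) (uz n m k A Z)"
  unfolding feasible_def
proof (intro conjI allI impI ballI xz_0 xz_in_vsp uz_in_vsp)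
  fix t i assume i: "i \<in> {1..n}"
  show "xz n m k Z (Suc t) i = (\<Sum>l=1..n. A i l * xz n m k Z t l) + (\<Sum>j=1..m. B i j * uz n m k A Z t j)"
  proof (cases "i \<in> k ` {1..m}")
    case True
    then obtain j0 where j0: "j0 \<in> {1..m}" and i_eq: "i = k j0"
      by blast
    have "(\<Sum>j=1..m. B i j * uz n m k A Z t j) = uz n m k A Z t j0"
      unfolding i_eq by (rule B_row_k_sum[OF j0])
    also have "\<dots> = zc m Z (int t + 1) j0 - (\<Sum>l=1..n. A (k j0) l * xz n m k Z t l)"
      unfolding uz_def using j0 by simp
    finally show ?thesis
      unfolding i_eq xz_k[OF j0] by (simp add: add.commute)
  next
    case False
    show ?thesis
      unfolding A_row_not_I_sum[OF i False] B_row_not_I_sum[OF i False] xz_Suc_not_I[OF i False] by simp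
  qed
qed

text \<open>The inverse of the change of variables: z_t^j is the k_j-th coordinate of x_t.\<close>

definition encode :: "nat \<Rightarrow> (nat \<Rightarrow> nat \<Rightarrow> real) \<Rightarrow> nat \<Rightarrow> real" where
  "encode N x = (\<lambda>c. if 1 \<le> c \<and> c \<le> m * N then x ((c - 1) div m + 1) (k ((c - 1) mod m + 1)) else 0)"

lemma encode_in_vsp: "encode N x \<in> vsp (m * N)"
  unfolding encode_def vsp_def by auto

lemma zc_encode:
  assumes t: "1 \<le> t" "t \<le> N" and j: "j \<in> {1..m}"
  shows "zc m (encode N x) (int t) j = x t (k j)"
proof -
  define c where "c = (t - 1) * m + j"
  have "c \<le> (t - 1) * m + m"
    unfolding c_def using j by simp
  also have "\<dots> = t * m"
    using t by (cases t) auto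
  also have "\<dots> \<le> m * N"
    using t by (simp add: mult.commute)
  finally have c: "1 \<le> c" "c \<le> m * N"
    unfolding c_def using j by auto
  have "c - 1 = (j - 1) + (t - 1) * m" and "j - 1 < m"
    unfolding c_def using j by auto
  then have "(c - 1) div m = t - 1" "(c - 1) mod m = j - 1"
    by simp_all
  moreover have "zc m (encode N x) (int t) j = encode N x c"
    unfolding zc_def c_def using t by simp
  ultimately show ?thesis
    unfolding encode_def using c t j by simp
qed

lemma xz_encode:
  assumes feas: "feasible n m N A B x u" and t: "t \<le> N"
  shows "xz n m k (encode N x) t = x t"
proof -
  let ?Z = "encode N x"
  have x0: "x 0 = (\<lambda>_. 0)"
    and dyn: "\<And>t i. t < N \<Longrightarrow> i \<in> {1..n} \<Longrightarrow>
      x (Suc t) i = (\<Sum>l=1..n. A i l * x t l) + (\<Sum>j=1..m. B i j * u t j)"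
    using feas unfolding feasible_def by auto
  have "\<forall>i\<in>{1..n}. xz n m k ?Z t i = x t i"
    using t
  proof (induction t)
    case 0
    then show ?case
      using xz_0 x0 by simp
  next
    case (Suc t)
    show ?case
    proof
      fix i assume i: "i \<in> {1..n}"
      show "xz n m k ?Z (Suc t) i = x (Suc t) i"
      proof (cases "i \<in> k ` {1..m}")
        case True
        then obtain j0 where j0: "j0 \<in> {1..m}" and i_eq: "i = k j0"
          by blast
        show ?thesis
          unfolding i_eq xz_k[OF j0] using zc_encode[OF _ Suc.prems j0] by simp
      next
        case False
        have "xz n m k ?Z (Suc t) i = xz n m k ?Z t (i + 1)"
          by (rule xz_Suc_not_I[OF i False])
        also have "\<dots> = x t (i + 1)"
          using Suc Suc_in_block(1)[OF i False] by simp
        also have "\<dots> = x (Suc t) i"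
          using dyn[of t i] Suc.prems i
          unfolding A_row_not_I_sum[OF i False] B_row_not_I_sum[OF i False] by simp
        finally show ?thesis .
      qed
    qed
  qed
  moreover have "x t \<in> vsp n"
    using feas t unfolding feasible_def by simp
  ultimately show ?thesis
    using vsp_eqI[OF xz_in_vsp] by blast
qed

lemma uz_encode:
  assumes feas: "feasible n m N A B x u" and t: "t < N"
  shows "uz n m k A (encode N x) t = u t"
proof (rule vsp_eqI[OF uz_in_vsp])
  show "u t \<in> vsp m"
    using feas t unfolding feasible_def by auto
  fix j assume j: "j \<in> {1..m}"
  have "x (Suc t) (k j) = (\<Sum>l=1..n. A (k j) l * x t l) + u t j"
    using feas t k_in_range[OF j] B_row_k_sum[OF j] unfolding feasible_def by auto
  moreover have "zc m (encode N x) (int t + 1) j = x (Suc t) (k j)"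
    using zc_encode[of "Suc t" N j x] t j by (simp add: add.commute)
  ultimately show "uz n m k A (encode N x) t j = u t j"
    unfolding uz_def xz_encode[OF feas less_imp_le[OF t]] using j by simp
qed

lemma Jcost_xz_uz: "Jcost N f g (xz n m k Z) (uz n m k A Z) = Ccost n m N k A f g Z"
proof -
  have "(\<Sum>t=0..N. f t (xz n m k Z t)) = (\<Sum>t<N. f t (xz n m k Z t)) + f N (xz n m k Z N)"
    by (simp add: atLeast0AtMost lessThan_Suc_atMost[symmetric])
  then show ?thesis
    unfolding Jcost_def Ccost_def by (simp add: sum.distrib)
qed

lemma Jstar_eq_Ccost_minimum:
  assumes p_min: "\<forall>z\<in>vsp (m * N). Ccost n m N k A f g p \<le> Ccost n m N k A f g z"
  shows "Jstar n m N A B f g = Ccost n m N k A f g p"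
  unfolding Jstar_def
proof (rule cInf_eq_minimum)
  show "Ccost n m N k A f g p \<in> {Jcost N f g x u |x u. feasible n m N A B x u}"
    using feasible_xz_uz[of N p] Jcost_xz_uz[of N f g p, symmetric] by blast
next
  fix y assume "y \<in> {Jcost N f g x u |x u. feasible n m N A B x u}"
  then obtain x u where feas: "feasible n m N A B x u" and y: "y = Jcost N f g x u"
    by blast
  have "y = Jcost N f g (xz n m k (encode N x)) (uz n m k A (encode N x))"
    unfolding y Jcost_def using xz_encode[OF feas] uz_encode[OF feas] by simp
  then show "Ccost n m N k A f g p \<le> y"
    unfolding Jcost_xz_uz using p_min encode_in_vsp by simp
qed

lemma regret_z_eq:
  assumes "\<forall>z\<in>vsp (m * N). Ccost n m N k A f g p \<le> Ccost n m N k A f g z"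
  shows "regret_z n m N k A B f g Z = Ccost n m N k A f g Z - Ccost n m N k A f g p"
  unfolding regret_z_def Jcost_xz_uz Jstar_eq_Ccost_minimum[OF assms] ..

end

theorem theorem1:
  fixes n m N W :: nat and k :: "nat \<Rightarrow> nat" and A B :: "nat \<Rightarrow> nat \<Rightarrow> real"
    and f g :: "nat \<Rightarrow> (nat \<Rightarrow> real) \<Rightarrow> real"
    and \<mu>f lf lg \<mu>c lc :: real and z0 :: "nat \<Rightarrow> real"
  assumes canon: "canonical_form n m k A B"
    and f_prop: "\<mu>f > 0" "\<forall>t\<le>N. strongly_convex_on n \<mu>f (f t) \<and> smooth_on n lf (f t)"
    and g_prop: "\<forall>t<N. strongly_convex_on m 0 (g t) \<and> smooth_on m lg (g t)"
    and W: "W \<ge> 1"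
    and C_prop: "\<mu>c > 0" "lc > 0"
      "strongly_convex_on (m * N) \<mu>c (Ccost n m N k A f g)"
      "smooth_on (m * N) lc (Ccost n m N k A f g)"
    and z0: "z0 \<in> vsp (m * N)"
  shows "let K = (W - 1) div ctrl_index m k;
             C = Ccost n m N k A f g;
             \<zeta> = lc / \<mu>c;
             \<gamma>g = 1 / lc;
             \<phi> = 1 - 1 / sqrt \<zeta>;
             \<gamma>c = (1 + \<phi>) / lc;
             \<gamma>\<omega> = \<phi>\<^sup>2 / (2 - \<phi>);
             \<gamma>y = \<phi>\<^sup>2 / ((1 + \<phi>) * (2 - \<phi>));
             \<gamma>z = \<phi>\<^sup>2 / (1 - \<phi>\<^sup>2)
         in regret_z n m N k A B f g (gd_iter (m * N) C \<gamma>g z0 K)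
              \<le> \<zeta> * ((\<zeta> - 1) / \<zeta>) ^ K * regret_z n m N k A B f g z0
          \<and> regret_z n m N k A B f g (tm_z (m * N) C \<gamma>c \<gamma>\<omega> \<gamma>y \<gamma>z z0 K)
              \<le> \<zeta>\<^sup>2 * ((sqrt \<zeta> - 1) / sqrt \<zeta>) ^ (2 * K) * regret_z n m N k A B f g z0"
proof -
  interpret canonical_system n m k A B
    using canon by unfold_locales
  interpret C: smooth_strongly_convex "m * N" lc \<mu>c "Ccost n m N k A f g"
    using C_prop by unfold_locales
  have "regret_z n m N k A B f g Z = Ccost n m N k A f g Z - Ccost n m N k A f g C.minimizer" for Z
    using regret_z_eq C.minimizer(2) by blast
  then show ?thesis
    using C.gd_regret_bound[OF z0] C.tm_regret_bound[OF z0] unfolding Let_def by simp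
qed

end
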